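(* Let $\bar\omega_G=0$, $\bar\xi=Qu^\star$, and assume $\bar\eta\in\operatorname{im}B^T\cap\Omega$ satisfies $0=-B_G\Gamma\sin(\bar\eta)-\lambda Q^{-1}\mathbf{1}$. Consider $\dot\eta=B_S^T(\eta)\omega_G$, $M\dot\omega_G=-A\omega_G-B_G\Gamma\sin(\eta)+u$ in closed loop with the controller $\dot\xi=-L_C\xi-Q^{-1}\omega_G$, $u=Q^{-1}\xi$. Then solutions $(\eta,\omega_G,\xi)$ with $B_L\Gamma\sin(\eta(0))=B_L\Gamma\sin(\bar\eta)$ locally converge to $(\bar\eta,\bar\omega_G,\bar\xi)$; consequently $u$ locally converges to the optimal input $u^\star$.
   Context: A connected undirected graph with $n$ nodes and $m$ edges, nodes partitioned into $n_g$ generator and $n_\ell$ load nodes; $B$ is an incidence matrix partitioned row-wise as $B=\begin{bmatrix}B_G^T & B_L^T\end{bmatrix}^T$. $\Gamma=\mathrm{diag}(\gamma_k)$ is positive definite, $M,A$ positive definite diagonal. $\sin,\cos$ act elementwise, $\Omega=(-\frac{\pi}{2},\frac{\pi}{2})^m$, $\Gamma'(\eta)=\Gamma\,\mathrm{diag}(\cos(\eta_k))$, $B_S(\eta)=B_G\big(I-\Gamma'(\eta)B_L^T(B_L\Gamma'(\eta)B_L^T)^{-1}B_L\big)$, $\mathbf{1}$ is the all-ones vector. $Q=\mathrm{diag}(q_i)$ with $q_i>0$ are generation cost coefficients; $p^\ast:=B_L\Gamma\sin(\bar\eta)$; $\lambda=\mathbf{1}^Tp^\ast/\sum_{i}q_i^{-1}$;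 $u^\star=-\lambda Q^{-1}\mathbf{1}$ is the minimizer of $\frac12\bar u^TQ\bar u$ subject to $0=\mathbf{1}^T\bar u+\mathbf{1}^Tp^\ast$. $L_C$ is the Laplacian matrix of a connected undirected communication graph on the generator nodes. *)

theory Defs
  imports "HOL-Analysis.Analysis"
begin

definition diag_mat :: "real^'n \<Rightarrow> real^'n^'n" where
  "diag_mat v = (\<chi> i j. if i = j then v$i else 0)"

definition vsin :: "real^'n \<Rightarrow> real^'n" where
  "vsin v = (\<chi> i. sin (v$i))"

definition vcos :: "real^'n \<Rightarrow> real^'n" where
  "vcos v = (\<chi> i. cos (v$i))"

definition Omega :: "(real^'e) set" where
  "Omega = {x. \<forall>k. \<bar>x$k\<bar> < pi/2}"

text \<open>Incidence matrix of an (arbitrarily oriented) undirected graph: rows = nodes,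
  columns = edges; each column has exactly one entry 1, one entry -1, all others 0.\<close>
definition incidence_matrix :: "real^'e^'n \<Rightarrow> bool" where
  "incidence_matrix B \<longleftrightarrow>
     (\<forall>e. \<exists>i j. i \<noteq> j \<and> B$i$e = 1 \<and> B$j$e = -1 \<and> (\<forall>k. k \<noteq> i \<and> k \<noteq> j \<longrightarrow> B$k$e = 0))"

definition connected_incidence :: "real^'e^'n \<Rightarrow> bool" where
  "connected_incidence B \<longleftrightarrow>
     (\<forall>x y. (x, y) \<in> {(i, j). \<exists>e. B$i$e \<noteq> 0 \<and> B$j$e \<noteq> 0}\<^sup>*)"

text \<open>Row blocks of B for generator nodes (Inl) and load nodes (Inr).\<close>
definition rows_G :: "real^'e^('g::finite + 'l::finite) \<Rightarrow> real^'e^'g" where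
  "rows_G B = (\<chi> i. B $ Inl i)"

definition rows_L :: "real^'e^('g::finite + 'l::finite) \<Rightarrow> real^'e^'l" where
  "rows_L B = (\<chi> i. B $ Inr i)"

definition Gamma' :: "real^'e \<Rightarrow> real^'e \<Rightarrow> real^'e^'e" where
  "Gamma' gamma eta = diag_mat gamma ** diag_mat (vcos eta)"

definition B_S :: "real^'e^'g \<Rightarrow> real^'e^'l \<Rightarrow> real^'e \<Rightarrow> real^'e \<Rightarrow> real^'e^'g" where
  "B_S BG BL gamma eta =
     BG ** (mat 1 - Gamma' gamma eta ** transpose BL
                    ** matrix_inv (BL ** Gamma' gamma eta ** transpose BL) ** BL)"

definition laplacian :: "real^'n^'n \<Rightarrow> real^'n^'n" where
  "laplacian W = (\<chi> i j. if i = j then (\<Sum>k\<in>UNIV - {i}. W$i$k) else - W$i$j)"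

definition comm_laplacian :: "real^'n^'n \<Rightarrow> bool" where
  "comm_laplacian L \<longleftrightarrow>
     (\<exists>W. (\<forall>i j. W$i$j = W$j$i) \<and> (\<forall>i j. 0 \<le> W$i$j) \<and> (\<forall>i. W$i$i = 0)
        \<and> (\<forall>x y. (x, y) \<in> {(i, j). 0 < W$i$j}\<^sup>*) \<and> L = laplacian W)"

end

theory Submission
  imports Defs
begin

text \<open>
  Let \<open>\<eta>\<^sup>*\<close> be the equilibrium angle and take the Lyapunov function
  \<open>V = \<omega>\<^sub>G\<^sup>T M \<omega>\<^sub>G / 2 + (\<Sum>\<^sub>k \<gamma>\<^sub>k (cos \<eta>\<^sup>*\<^sub>k - cos \<eta>\<^sub>k - sin \<eta>\<^sup>*\<^sub>k (\<eta>\<^sub>k - \<eta>\<^sup>*\<^sub>k))) + |\<xi> - \<xi>\<^sup>*|\<^sup>2 / 2\<close>.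
  The middle term is the Bregman divergence of \<open>-\<Sum>\<^sub>k \<gamma>\<^sub>k cos \<eta>\<^sub>k\<close> and is positive definite
  while \<open>cos \<eta>\<close> stays away from zero. There \<open>B\<^sub>S(\<eta>)\<close> is well defined, the load injections
  \<open>B\<^sub>L \<Gamma> sin \<eta>\<close> are conserved and \<open>dV/dt = -\<omega>\<^sub>G\<^sup>T A \<omega>\<^sub>G - \<xi>\<^sup>T L\<^sub>C \<xi> \<le> 0\<close>. Hence
  trajectories starting close to the equilibrium never leave a ball on which \<open>cos \<eta>\<close> is bounded
  below, and they are bounded with bounded derivatives. Barbalat's lemma then gives \<open>\<omega>\<^sub>G \<rightarrow> 0\<close> and
  consensus of \<open>\<xi>\<close>, and a second application gives \<open>d\<omega>\<^sub>G/dt \<rightarrow> 0\<close>. Summing the frequency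
  equation over the generators, the zero column sums of \<open>B\<close> identify the consensus value as \<open>-\<lambda>\<close>,
  whence \<open>B \<Gamma> (sin \<eta> - sin \<eta>\<^sup>*) \<rightarrow> 0\<close>. Finally \<open>\<eta> - \<eta>\<^sup>*\<close> stays in \<open>im B\<^sup>T\<close>, on which \<open>B\<close> is
  injective, and \<open>sin\<close> is strongly monotone on the ball, so \<open>\<eta> \<rightarrow> \<eta>\<^sup>*\<close>.
\<close>

section \<open>Analysis on the half-line and Barbalat's lemma\<close>

lemma norm_diff_le_of_vector_derivative_bound:
  fixes f :: "real \<Rightarrow> 'a::real_normed_vector"
  assumes "s \<le> t" "\<And>x. x \<in> {s..t} \<Longrightarrow> (f has_vector_derivative f' x) (at x within {s..t})"
    "\<And>x. x \<in> {s..t} \<Longrightarrow> norm (f' x) \<le> K"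
  shows "norm (f t - f s) \<le> K * (t - s)"
proof -
  have "norm (f t - f s) \<le> K * norm (t - s)"
  proof (rule differentiable_bound[of "{s..t}" f "\<lambda>x h. h *\<^sub>R f' x" K])
    fix x assume x: "x \<in> {s..t}"
    show "(f has_derivative (\<lambda>h. h *\<^sub>R f' x)) (at x within {s..t})"
      using assms(2)[OF x] by (simp add: has_vector_derivative_def)
    show "onorm (\<lambda>h. h *\<^sub>R f' x) \<le> K"
      using assms(3)[OF x] by (simp add: onorm_scaleR_left onorm_id)
  qed (use assms in auto)
  thus ?thesis using assms(1) by simp
qed

lemma norm_diff_le_of_vector_derivative_bound_nonneg:
  fixes f :: "real \<Rightarrow> 'a::real_normed_vector"
  assumes "0 \<le> s" "s \<le> t" "\<And>x. x \<ge> 0 \<Longrightarrow> (f has_vector_derivative f' x) (at x within {0..})"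
    "\<And>x. x \<ge> 0 \<Longrightarrow> norm (f' x) \<le> K"
  shows "norm (f t - f s) \<le> K * (t - s)"
proof (rule norm_diff_le_of_vector_derivative_bound[OF assms(2)])
  fix x assume x: "x \<in> {s..t}"
  hence x0: "0 \<le> x" using assms(1) by auto
  have "{s..t} \<subseteq> {0..}" using assms(1) by auto
  with assms(3)[OF x0] show "(f has_vector_derivative f' x) (at x within {s..t})"
    by (rule has_vector_derivative_within_subset)
  show "norm (f' x) \<le> K" using assms(4)[OF x0] .
qed

lemma mvt_nonneg_reals:
  fixes V :: "real \<Rightarrow> real"
  assumes "0 \<le> s" "s \<le> t" "\<And>x. x \<ge> 0 \<Longrightarrow> (V has_real_derivative D x) (at x within {0..})"
  shows "\<exists>x\<in>{s..t}. V t - V s = D x * (t - s)"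
proof -
  have "\<exists>x\<in>{s..t}. V t - V s = (*) (D x) (t - s)"
  proof (rule mvt_very_simple[OF assms(2)])
    fix x assume "s \<le> x" "x \<le> t"
    then have "(V has_real_derivative D x) (at x within {s..t})"
      using assms(1) assms(3)[of x] by (auto intro: DERIV_subset)
    thus "(V has_derivative (*) (D x)) (at x within {s..t})"
      by (simp add: has_field_derivative_def)
  qed
  thus ?thesis by simp
qed

lemma antimono_of_nonpos_derivative:
  fixes V :: "real \<Rightarrow> real"
  assumes "\<And>x. x \<ge> 0 \<Longrightarrow> (V has_real_derivative D x) (at x within {0..})"
    and "\<And>x. x \<ge> 0 \<Longrightarrow> D x \<le> 0" and "0 \<le> s" "s \<le> t"
  shows "V t \<le> V s"
proof -
  obtain x where "x \<in> {s..t}" "V t - V s = D x * (t - s)"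
    using mvt_nonneg_reals[OF assms(3,4) assms(1)] by blast
  moreover have "D x * (t - s) \<le> 0"
    using assms(2)[of x] assms(3,4) \<open>x \<in> {s..t}\<close> by (auto intro: mult_nonpos_nonneg)
  ultimately show ?thesis by simp
qed

text \<open>If \<open>V \<ge> 0\<close> decreases at rate \<open>g \<ge> 0\<close>, every visit of \<open>g\<close> above \<open>e\<close> costs \<open>V\<close> a fixed
  amount by uniform continuity, so there can only be finitely many.\<close>
lemma barbalat_lyapunov:
  fixes V g :: "real \<Rightarrow> real"
  assumes dV: "\<And>t. t \<ge> 0 \<Longrightarrow> (V has_real_derivative - g t) (at t within {0..})"
    and V_nonneg: "\<And>t. t \<ge> 0 \<Longrightarrow> V t \<ge> 0"
    and g_nonneg: "\<And>t. t \<ge> 0 \<Longrightarrow> g t \<ge> 0"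
    and uc: "\<And>e. e > 0 \<Longrightarrow> \<exists>d>0. \<forall>s\<ge>0. \<forall>t\<ge>0. \<bar>s - t\<bar> < d \<longrightarrow> dist (g s) (g t) < e"
  shows "(g \<longlongrightarrow> 0) at_top"
proof (rule ccontr)
  have mono: "V t \<le> V s" if "0 \<le> s" "s \<le> t" for s t
    using antimono_of_nonpos_derivative[OF dV _ that] g_nonneg by simp
  assume "\<not> (g \<longlongrightarrow> 0) at_top"
  then obtain e where e: "e > 0" "\<not> eventually (\<lambda>t. dist (g t) 0 < e) at_top"
    unfolding tendsto_iff by blast
  have big: "\<exists>t\<ge>T. g t \<ge> e" for T
  proof -
    from e(2) have "\<not> (\<exists>N. \<forall>n\<ge>N. dist (g n) 0 < e)" by (simp add: eventually_at_top_linorder)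
    then obtain t where "t \<ge> max T 0" "\<not> dist (g t) 0 < e" by blast
    thus ?thesis using g_nonneg[of t] by auto
  qed
  obtain d where d: "d > 0" "\<forall>s\<ge>0. \<forall>t\<ge>0. \<bar>s - t\<bar> < d \<longrightarrow> dist (g s) (g t) < e/2"
    using uc[of "e/2"] e by auto
  define h where "h = d/2"
  have h: "h > 0" "h < d" using d by (auto simp: h_def)
  have step: "V (t + h) \<le> V t - e * h / 2" if tg: "t \<ge> 0" "g t \<ge> e" for t
  proof -
    obtain x where x: "x \<in> {t..t+h}" "V (t+h) - V t = - g x * (t + h - t)"
      using mvt_nonneg_reals[of t "t+h" V "\<lambda>x. - g x", OF tg(1) _ dV] h by auto
    have "\<bar>x - t\<bar> < d" using x(1) h by auto
    hence "\<bar>g x - g t\<bar> < e/2" using d x(1) tg by (auto simp: dist_real_def)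
    hence "g x \<ge> e/2" using tg by linarith
    hence "g x * h \<ge> e/2 * h" using h by (intro mult_right_mono) auto
    thus ?thesis using x(2) by simp
  qed
  have descent: "\<exists>t\<ge>0. V t \<le> V 0 - real k * (e * h / 2)" for k
  proof (induction k)
    case 0 show ?case by (rule exI[of _ 0]) simp
  next
    case (Suc k)
    then obtain t where t: "t \<ge> 0" "V t \<le> V 0 - real k * (e * h / 2)" by blast
    obtain s where s: "s \<ge> t" "g s \<ge> e" using big by blast
    have "V (s + h) \<le> V s - e * h / 2" using step[of s] s t by auto
    also have "\<dots> \<le> V t - e * h / 2" using mono[of t s] s t by auto
    finally have "V (s + h) \<le> V 0 - real (Suc k) * (e * h / 2)"
      using t by (simp add: distrib_right add_divide_distrib)
    thus ?case using t s h by (intro exI[of _ "s+h"]) auto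
  qed
  have "e * h / 2 > 0" using e h by auto
  then obtain k where "V 0 < real k * (e * h / 2)"
    using reals_Archimedean2[of "V 0 / (e * h / 2)"] by (auto simp: divide_less_eq)
  then obtain t where "t \<ge> 0" "V t < 0" using descent[of k] by force
  thus False using V_nonneg by force
qed

text \<open>Compare \<open>x(t + h) - x(t)\<close> with \<open>h x'(t)\<close> for a fixed small \<open>h\<close>.\<close>
lemma barbalat:
  fixes x x' :: "real \<Rightarrow> 'a::real_normed_vector"
  assumes dx: "\<And>t. t \<ge> 0 \<Longrightarrow> (x has_vector_derivative x' t) (at t within {0..})"
    and x_lim: "(x \<longlongrightarrow> 0) at_top"
    and uc: "\<And>e. e > 0 \<Longrightarrow> \<exists>d>0. \<forall>s\<ge>0. \<forall>t\<ge>0. \<bar>s - t\<bar> < d \<longrightarrow> dist (x' s) (x' t) < e"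
  shows "(x' \<longlongrightarrow> 0) at_top"
  unfolding tendsto_iff
proof (intro allI impI)
  fix e :: real assume e: "e > 0"
  obtain d where d: "d > 0" "\<forall>s\<ge>0. \<forall>t\<ge>0. \<bar>s - t\<bar> < d \<longrightarrow> dist (x' s) (x' t) < e/3"
    using uc[of "e/3"] e by auto
  define h where "h = d/2"
  have h: "h > 0" "h < d" using d by (auto simp: h_def)
  have "e * h / 3 > 0" using e h by auto
  then have "eventually (\<lambda>t. dist (x t) 0 < e * h / 3) at_top"
    using x_lim unfolding tendsto_iff by blast
  then obtain T where T: "\<And>t. t \<ge> T \<Longrightarrow> norm (x t) < e * h / 3"
    by (auto simp: eventually_at_top_linorder)
  show "eventually (\<lambda>t. dist (x' t) 0 < e) at_top"
    unfolding eventually_at_top_linorder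
  proof (intro exI[of _ "max T 0"] allI impI)
    fix t assume t: "t \<ge> max T 0"
    define \<phi> where "\<phi> = (\<lambda>s. x s - s *\<^sub>R x' t)"
    have "norm (\<phi> (t + h) - \<phi> t) \<le> e / 3 * (t + h - t)"
    proof (rule norm_diff_le_of_vector_derivative_bound[of t "t+h" \<phi> "\<lambda>s. x' s - x' t"])
      fix s assume s: "s \<in> {t..t+h}"
      have "(x has_vector_derivative x' s) (at s within {t..t+h})"
        using dx[of s] s t by (auto intro: has_vector_derivative_within_subset)
      moreover have "((\<lambda>s. s *\<^sub>R x' t) has_vector_derivative x' t) (at s within {t..t+h})"
        using has_vector_derivative_scaleR[OF DERIV_ident has_vector_derivative_const] by simp
      ultimately show "(\<phi> has_vector_derivative x' s - x' t) (at s within {t..t + h})"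
        unfolding \<phi>_def by (rule has_vector_derivative_diff)
      have "dist (x' s) (x' t) < e/3" using d s t h by auto
      thus "norm (x' s - x' t) \<le> e/3" by (simp add: dist_norm)
    qed (use h in auto)
    hence A: "norm (x (t+h) - x t - h *\<^sub>R x' t) \<le> e / 3 * h"
      by (simp add: \<phi>_def algebra_simps)
    have "h * norm (x' t) = norm ((x(t+h) - x t) - (x(t+h) - x t - h *\<^sub>R x' t))" using h by simp
    also have "\<dots> \<le> norm (x (t+h) - x t - h *\<^sub>R x' t) + norm (x (t+h)) + norm (x t)"
      using norm_triangle_ineq4[of "x(t+h) - x t" "x(t+h) - x t - h *\<^sub>R x' t"]
        norm_triangle_ineq4[of "x(t+h)" "x t"] by linarith
    also have "\<dots> < e/3*h + e*h/3 + e*h/3" using A T[of t] T[of "t+h"] t h by auto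
    finally have "h * norm (x' t) < h * e" by (simp add: algebra_simps)
    thus "dist (x' t) 0 < e" using h by simp
  qed
qed

lemma uniformly_continuous_comp_lipschitz_path:
  fixes z :: "real \<Rightarrow> 'a::metric_space" and F :: "'a \<Rightarrow> 'b::metric_space"
  assumes "compact C" "continuous_on C F" "\<And>t. t \<ge> 0 \<Longrightarrow> z t \<in> C"
    and lip: "\<And>s t. 0 \<le> s \<Longrightarrow> s \<le> t \<Longrightarrow> dist (z t) (z s) \<le> K * (t - s)"
    and e: "e > 0"
  shows "\<exists>d>0. \<forall>s\<ge>0. \<forall>t\<ge>0. \<bar>s - t\<bar> < d \<longrightarrow> dist (F (z s)) (F (z t)) < e"
proof -
  have "uniformly_continuous_on C F" using assms by (intro compact_uniformly_continuous)
  then obtain d where d: "d > 0" "\<forall>x\<in>C. \<forall>x'\<in>C. dist x' x < d \<longrightarrow> dist (F x') (F x) < e"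
    using e unfolding uniformly_continuous_on_def by blast
  have lip': "dist (z s) (z t) \<le> \<bar>K\<bar> * \<bar>s - t\<bar>" if "s \<ge> 0" "t \<ge> 0" for s t
  proof (cases "s \<le> t")
    case True
    then have "dist (z s) (z t) \<le> K * (t - s)" using lip[of s t] that by (simp add: dist_commute)
    also have "\<dots> \<le> \<bar>K\<bar> * \<bar>s - t\<bar>" using True by (simp add: abs_mult mult_right_mono)
    finally show ?thesis .
  next
    case False
    then have "dist (z s) (z t) \<le> K * (s - t)" using lip[of t s] that by simp
    also have "\<dots> \<le> \<bar>K\<bar> * \<bar>s - t\<bar>" using False by (simp add: abs_mult mult_right_mono)
    finally show ?thesis .
  qed
  show ?thesis
  proof (intro exI[of _ "d / (\<bar>K\<bar> + 1)"] conjI allI impI)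
    show "d / (\<bar>K\<bar> + 1) > 0" using d by auto
    fix s t :: real assume st: "s \<ge> 0" "t \<ge> 0" "\<bar>s - t\<bar> < d / (\<bar>K\<bar> + 1)"
    have "\<bar>K\<bar> * \<bar>s - t\<bar> \<le> (\<bar>K\<bar>+1) * \<bar>s - t\<bar>" by (simp add: mult_right_mono)
    also have "\<dots> < d" using st(3) by (simp add: field_simps)
    finally have "dist (z s) (z t) < d" using lip'[OF st(1,2)] by linarith
    thus "dist (F (z s)) (F (z t)) < e" using d assms(3) st by auto
  qed
qed

lemma compact_imp_norm_bounded_image:
  fixes F :: "'a::metric_space \<Rightarrow> 'b::real_normed_vector"
  assumes "compact C" "continuous_on C F"
  shows "\<exists>K. \<forall>x\<in>C. norm (F x) \<le> K"
  using compact_imp_bounded[OF compact_continuous_image[OF assms(2,1)]]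
  unfolding bounded_pos by blast

lemma dist_Pair_le: "dist (a, b) (c, d) \<le> dist a c + dist b d"
  unfolding dist_Pair_Pair by (rule sqrt_sum_squares_le_sum) auto

lemma first_exit_from_ball:
  fixes z :: "real \<Rightarrow> 'a::metric_space"
  assumes cont: "continuous_on {0..} z" and z0: "z 0 \<in> ball c r"
    and t: "0 \<le> t" "z t \<notin> ball c r"
  obtains t0 where "0 \<le> t0" "z t0 \<notin> ball c r" "\<forall>s\<in>{0..t0}. z s \<in> cball c r"
proof -
  define S where "S = {s. 0 \<le> s \<and> z s \<notin> ball c r}"
  have neS: "S \<noteq> {}" using t by (auto simp: S_def)
  have "S = {0..} \<inter> z -` (- ball c r)" by (auto simp: S_def)
  hence clS: "closed S" by (auto intro: continuous_closed_preimage[OF cont])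
  have bdd: "bdd_below S" by (auto simp: S_def bdd_below_def)
  define t0 where "t0 = Inf S"
  have "t0 \<in> S" unfolding t0_def by (rule closed_contains_Inf[OF neS bdd clS])
  hence t00: "0 \<le> t0" and out: "z t0 \<notin> ball c r" by (auto simp: S_def)
  have before: "z s \<in> ball c r" if "0 \<le> s" "s < t0" for s
    using cInf_lower[OF _ bdd, of s] that unfolding t0_def S_def by force
  have t0pos: "0 < t0" using t00 out z0 by (cases "t0 = 0") auto
  have "dist c (z t0) \<le> r"
  proof (rule ccontr)
    assume "\<not> dist c (z t0) \<le> r"
    hence "dist c (z t0) - r > 0" by simp
    moreover have "continuous (at t0 within {0..}) z"
      using cont t00 by (simp add: continuous_on_eq_continuous_within)
    ultimately obtain d where d: "d > 0"
      "\<forall>x'\<in>{0..}. dist x' t0 < d \<longrightarrow> dist (z x') (z t0) < dist c (z t0) - r"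
      unfolding continuous_within_eps_delta by blast
    define s where "s = max 0 (t0 - d/2)"
    have s: "0 \<le> s" "s < t0" "dist s t0 < d" using d t0pos by (auto simp: s_def dist_real_def)
    hence "dist (z s) (z t0) < dist c (z t0) - r" using d by auto
    moreover have "dist c (z s) < r" using before[OF s(1,2)] by simp
    ultimately show False using dist_triangle[of c "z t0" "z s"] by linarith
  qed
  hence "\<forall>s\<in>{0..t0}. z s \<in> cball c r"
    using before by (metis atLeastAtMost_iff mem_ball mem_cball order_le_less less_imp_le)
  with t00 out show thesis by (rule that)
qed

lemma has_real_derivative_vec_nth:
  "(f has_vector_derivative f') F \<Longrightarrow> ((\<lambda>s. f s $ i) has_real_derivative f' $ i) F"
  unfolding has_real_derivative_iff_has_vector_derivative
  by (rule bounded_linear.has_vector_derivative[OF bounded_linear_vec_nth])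

section \<open>Estimates for sine and cosine away from \<open>\<plusminus>\<pi>/2\<close>\<close>

lemma cos_ge_cos_of_abs_le:
  fixes z rho :: real
  assumes "rho < pi/2" "\<bar>z\<bar> \<le> rho"
  shows "cos rho \<le> cos z"
proof -
  have "cos rho \<le> cos \<bar>z\<bar>" by (rule cos_monotone_0_pi_le) (use assms pi_gt_zero in auto)
  thus ?thesis by simp
qed

lemma sin_diff_ge:
  fixes x y rho :: real
  assumes "rho < pi/2" "\<bar>x\<bar> \<le> rho" "\<bar>y\<bar> \<le> rho" "y < x"
  shows "cos rho * (x - y) \<le> sin x - sin y"
proof -
  obtain z where z: "y < z" "z < x" "sin x - sin y = (x - y) * cos z"
    using MVT2[OF assms(4), of sin cos] by (auto intro: DERIV_sin)
  have "\<bar>z\<bar> \<le> rho" using z assms by auto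
  hence "cos rho \<le> cos z" using cos_ge_cos_of_abs_le assms(1) by blast
  thus ?thesis using z assms(4) by (simp add: mult_left_mono mult.commute)
qed

lemma sin_strongly_monotone:
  fixes x y rho :: real
  assumes "rho < pi/2" "\<bar>x\<bar> \<le> rho" "\<bar>y\<bar> \<le> rho"
  shows "cos rho * (x - y)^2 \<le> (x - y) * (sin x - sin y)"
proof (cases x y rule: linorder_cases)
  case less
  with sin_diff_ge[OF assms(1,3,2)] have "cos rho * (y - x) * (y - x) \<le> (sin y - sin x) * (y - x)"
    by (intro mult_right_mono) auto
  thus ?thesis by (simp add: power2_eq_square algebra_simps)
next
  case greater
  with sin_diff_ge[OF assms] have "cos rho * (x - y) * (x - y) \<le> (sin x - sin y) * (x - y)"
    by (intro mult_right_mono) auto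
  thus ?thesis by (simp add: power2_eq_square algebra_simps)
qed simp

lemma cos_bregman_lower_bound:
  fixes x y rho :: real
  assumes rho: "rho < pi/2" and "\<bar>x\<bar> \<le> rho" "\<bar>y\<bar> \<le> rho"
  shows "cos rho / 2 * (x - y)^2 \<le> cos y - cos x - sin y * (x - y)"
proof -
  define \<phi> where "\<phi> = (\<lambda>s. cos y - cos s - sin y * (s - y) - cos rho / 2 * (s - y)^2)"
  have d: "DERIV \<phi> s :> (sin s - sin y) - cos rho * (s - y)" for s
    unfolding \<phi>_def by (auto intro!: derivative_eq_intros simp: power2_eq_square algebra_simps)
  have \<phi>y: "\<phi> y = 0" by (simp add: \<phi>_def)
  have "\<phi> x \<ge> 0"
  proof (cases x y rule: linorder_cases)
    case less
    obtain z where z: "x < z" "z < y" "\<phi> y - \<phi> x = (y - x) * ((sin z - sin y) - cos rho * (z - y))"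
      using MVT2[OF less d] by blast
    have "\<bar>z\<bar> \<le> rho" using z assms by auto
    hence "cos rho * (y - z) \<le> sin y - sin z" using sin_diff_ge[OF rho] z assms by blast
    hence "(y - x) * ((sin z - sin y) - cos rho * (z - y)) \<le> 0"
      using less by (intro mult_nonneg_nonpos) (auto simp: algebra_simps)
    thus ?thesis using z \<phi>y by linarith
  next
    case greater
    obtain z where z: "y < z" "z < x" "\<phi> x - \<phi> y = (x - y) * ((sin z - sin y) - cos rho * (z - y))"
      using MVT2[OF greater d] by blast
    have "\<bar>z\<bar> \<le> rho" using z assms by auto
    hence "cos rho * (z - y) \<le> sin z - sin y" using sin_diff_ge[OF rho] z assms by blast
    thus ?thesis using z greater \<phi>y by (simp add: mult_nonneg_nonneg)
  qed (simp add: \<phi>y)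
  thus ?thesis by (simp add: \<phi>_def)
qed

section \<open>Matrix calculus\<close>

declare transpose_matrix_vector[simp del]

lemma diag_mat_mult_vec: "diag_mat v *v x = (\<chi> i. v$i * x$i)"
proof (subst vec_eq_iff, intro allI)
  fix i
  have "(diag_mat v *v x)$i = (\<Sum>j\<in>UNIV. if i = j then v$i * x$i else 0)"
    unfolding matrix_vector_mult_def diag_mat_def vec_lambda_beta by (rule sum.cong) auto
  thus "(diag_mat v *v x)$i = (\<chi> i. v$i * x$i)$i" by simp
qed

lemma diag_mat_mult_diag_mat: "diag_mat u ** diag_mat v = diag_mat (\<chi> i. u$i * v$i)"
proof (subst vec_eq_iff, intro allI, subst vec_eq_iff, intro allI)
  fix i j
  have "(diag_mat u ** diag_mat v)$i$j = (\<Sum>k\<in>UNIV. if k = i then (if i = j then u$i * v$i else 0) else 0)"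
    unfolding matrix_matrix_mult_def diag_mat_def vec_lambda_beta by (rule sum.cong) auto
  thus "(diag_mat u ** diag_mat v)$i$j = diag_mat (\<chi> i. u$i * v$i)$i$j" by (simp add: diag_mat_def)
qed

lemma transpose_diag_mat: "transpose (diag_mat v) = diag_mat v"
  by (simp add: vec_eq_iff diag_mat_def transpose_def)

lemma inner_diag_mat_commute: "u \<bullet> (diag_mat d *v v) = v \<bullet> (diag_mat d *v u)"
  by (simp add: diag_mat_mult_vec inner_vec_def algebra_simps)

lemma transpose_diff: "transpose (A - (C::real^'n^'m)) = transpose A - transpose C"
  by (simp add: vec_eq_iff transpose_def)

lemma matrix_vector_mult_uminus: "A *v (- x) = - (A *v (x::real^'n))"
  by (simp add: matrix_vector_mult_def vec_eq_iff sum_negf)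

lemma inner_matrix_vector_mult: "(x::real^'n) \<bullet> (A *v y) = (transpose A *v x) \<bullet> y"
  by (simp add: dot_lmul_matrix[symmetric] transpose_matrix_vector)

lemma norm_pow2_eq_sum: "(norm (x::real^'n))^2 = (\<Sum>i\<in>UNIV. (x$i)^2)"
  unfolding power2_norm_eq_inner inner_vec_def by (simp add: power2_eq_square)

lemma Gamma'_eq_diag_mat: "Gamma' gamma eta = diag_mat (\<chi> e. gamma$e * cos (eta$e))"
  by (simp add: Gamma'_def diag_mat_mult_diag_mat vcos_def)

lemma transpose_B_S_mult_vec:
  "transpose (B_S BG BL gamma eta) *v w =
     transpose BG *v w - transpose BL *v (transpose (matrix_inv (BL ** Gamma' gamma eta ** transpose BL))
        *v (BL *v (Gamma' gamma eta *v (transpose BG *v w))))"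
proof -
  let ?G = "Gamma' gamma eta"
  let ?X = "matrix_inv (BL ** ?G ** transpose BL)"
  have "transpose ?G = ?G" by (simp add: Gamma'_eq_diag_mat transpose_diag_mat)
  then have "transpose (B_S BG BL gamma eta) = (mat 1 - transpose BL ** transpose ?X ** BL ** ?G) ** transpose BG"
    by (simp add: B_S_def matrix_transpose_mul transpose_diff matrix_mul_assoc)
  thus ?thesis
    by (simp add: matrix_vector_mult_diff_rdistrib flip: matrix_vector_mul_assoc)
qed

lemma matrix_range_bounded_preimage:
  fixes A :: "real^'n::finite^'m::finite"
  shows "\<exists>C>0. \<forall>v\<in>range ((*v) A). \<exists>x. A *v x = v \<and> norm x \<le> C * norm v"
proof -
  obtain g where g: "linear g" "\<forall>v\<in>range ((*v) A). A *v g v = v"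
    using linear_exists_right_inverse_on[OF matrix_vector_mul_linear subspace_UNIV] by blast
  obtain C where "C > 0" "\<And>x. norm (g x) \<le> C * norm x" using linear_bounded_pos[OF g(1)] by blast
  thus ?thesis using g(2) by (intro exI[of _ C]) auto
qed

lemma orthogonal_kernel_imp_in_range_transpose:
  fixes A :: "real^'n::finite^'m::finite"
  assumes "\<forall>z. A *v z = 0 \<longrightarrow> z \<bullet> y = 0"
  shows "y \<in> range ((*v) (transpose A))"
proof -
  have lin: "linear (\<lambda>x. A *v x)" by simp
  have ker: "(\<lambda>x. A *v x) -` {0} = (range (\<lambda>x. transpose A *v x))\<^sup>\<bottom>"
    using ker_orthogonal_comp_adjoint[OF lin] by (simp add: adjoint_matrix)
  have sub: "subspace (range (\<lambda>x. transpose A *v x))"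
    by (rule linear_subspace_image) (simp_all add: subspace_UNIV)
  have "y \<in> ((\<lambda>x. A *v x) -` {0})\<^sup>\<bottom>"
    using assms by (auto simp: orthogonal_comp_def orthogonal_def)
  thus ?thesis unfolding ker orthogonal_comp_self[OF sub] .
qed

section \<open>Incidence matrices and Laplacians\<close>

lemma sum_UNIV_Plus:
  "(\<Sum>n\<in>(UNIV::('a::finite + 'b::finite) set). f n) = (\<Sum>i\<in>UNIV. f (Inl i)) + (\<Sum>j\<in>UNIV. f (Inr j))"
  by (subst UNIV_Plus_UNIV[symmetric], subst sum.Plus) auto

lemma matrix_vector_mult_Inl: "(B *v x) $ Inl i = (rows_G B *v x) $ i"
  by (simp add: matrix_vector_mult_def rows_G_def)

lemma matrix_vector_mult_Inr: "(B *v x) $ Inr i = (rows_L B *v x) $ i"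
  by (simp add: matrix_vector_mult_def rows_L_def)

lemma transpose_mult_vec_rows:
  fixes B :: "real^'e::finite^('g::finite + 'l::finite)"
  shows "transpose B *v z =
    transpose (rows_G B) *v (\<chi> i. z $ Inl i) + transpose (rows_L B) *v (\<chi> j. z $ Inr j)"
  by (simp add: vec_eq_iff matrix_vector_mult_def transpose_def rows_G_def rows_L_def sum_UNIV_Plus)

lemma inner_mult_vec_rows:
  fixes B :: "real^'e::finite^('g::finite + 'l::finite)"
  shows "(B *v x) \<bullet> z = (rows_G B *v x) \<bullet> (\<chi> i. z$Inl i) + (rows_L B *v x) \<bullet> (\<chi> j. z $ Inr j)"
  by (simp add: inner_vec_def sum_UNIV_Plus matrix_vector_mult_Inl matrix_vector_mult_Inr)

lemma incidence_matrix_sum_column: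
  fixes B :: "real^'e::finite^'n::finite"
  assumes "incidence_matrix B"
  shows "(\<Sum>n\<in>UNIV. B$n$e) = 0"
proof -
  obtain i j where ij: "i \<noteq> j" "B$i$e = 1" "B$j$e = -1" "\<forall>k. k \<noteq> i \<and> k \<noteq> j \<longrightarrow> B$k$e = 0"
    using assms unfolding incidence_matrix_def by blast
  have "(\<Sum>n\<in>UNIV. B$n$e) = (\<Sum>n\<in>{i,j}. B$n$e)"
    by (rule sum.mono_neutral_right) (use ij in auto)
  also have "\<dots> = 0" using ij by simp
  finally show ?thesis .
qed

lemma incidence_matrix_sum_mult_vec:
  fixes B :: "real^'e::finite^'n::finite"
  assumes "incidence_matrix B"
  shows "(\<Sum>n\<in>UNIV. (B *v x)$n) = 0"
proof -
  have "(\<Sum>n\<in>UNIV. (B *v x)$n) = (\<Sum>n\<in>UNIV. \<Sum>e\<in>UNIV. B$n$e * x$e)"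
    by (simp add: matrix_vector_mult_def)
  also have "\<dots> = (\<Sum>e\<in>UNIV. (\<Sum>n\<in>UNIV. B$n$e) * x$e)"
    by (subst sum.swap) (simp add: sum_distrib_right)
  also have "\<dots> = 0" using incidence_matrix_sum_column[OF assms] by simp
  finally show ?thesis .
qed

lemma incidence_matrix_sum_rows_G:
  fixes B :: "real^'e::finite^('g::finite + 'l::finite)"
  assumes "incidence_matrix B"
  shows "(\<Sum>i\<in>UNIV. (rows_G B *v x)$i) = - (\<Sum>j\<in>UNIV. (rows_L B *v x)$j)"
  using incidence_matrix_sum_mult_vec[OF assms, of x]
  by (simp add: sum_UNIV_Plus matrix_vector_mult_Inl matrix_vector_mult_Inr)

lemma incidence_matrix_kernel_transpose_const:
  fixes B :: "real^'e::finite^'n::finite"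
  assumes inc: "incidence_matrix B" and con: "connected_incidence B"
    and y: "transpose B *v y = 0"
  shows "y$n = y$m"
proof -
  let ?R = "{(i, j). \<exists>e. B$i$e \<noteq> 0 \<and> B$j$e \<noteq> 0}"
  have edge: "y$i = y$j" if ij: "(i,j) \<in> ?R" for i j
  proof -
    obtain e where e: "B$i$e \<noteq> 0" "B$j$e \<noteq> 0" using ij by blast
    obtain u v where uv: "u \<noteq> v" "B$u$e = 1" "B$v$e = -1" "\<forall>k. k \<noteq> u \<and> k \<noteq> v \<longrightarrow> B$k$e = 0"
      using inc unfolding incidence_matrix_def by blast
    have "(transpose B *v y)$e = (\<Sum>n\<in>UNIV. B$n$e * y$n)"
      by (simp add: matrix_vector_mult_def transpose_def)
    also have "\<dots> = (\<Sum>n\<in>{u,v}. B$n$e * y$n)"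
      by (rule sum.mono_neutral_right) (use uv in auto)
    also have "\<dots> = y$u - y$v" using uv by simp
    finally have "y$u = y$v" using y by simp
    moreover have "i \<in> {u,v}" "j \<in> {u,v}" using e uv by auto
    ultimately show ?thesis by auto
  qed
  have "(n, m) \<in> ?R\<^sup>*" using con unfolding connected_incidence_def by blast
  thus ?thesis
    by (induction rule: rtrancl_induct) (simp_all add: edge)
qed

lemma incidence_matrix_rows_L_transpose_inj:
  fixes B :: "real^'e::finite^('g::finite + 'l::finite)"
  assumes inc: "incidence_matrix B" and con: "connected_incidence B"
  shows "inj ((*v) (transpose (rows_L B)))"
proof (rule linear_injective_0[OF matrix_vector_mul_linear, THEN iffD2], intro allI impI)
  fix x assume x: "transpose (rows_L B) *v x = 0"
  define y :: "real^('g+'l)" where "y = (\<chi> n. case n of Inl _ \<Rightarrow> 0 | Inr j \<Rightarrow> x$j)"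
  have "transpose B *v y = transpose (rows_G B) *v 0 + transpose (rows_L B) *v x"
    unfolding transpose_mult_vec_rows by (simp add: y_def vec_eq_iff flip: zero_vec_def)
  hence "transpose B *v y = 0" using x by simp
  hence "y$(Inr j) = y$(Inl undefined)" for j by (rule incidence_matrix_kernel_transpose_const[OF inc con])
  thus "x = 0" by (simp add: y_def vec_eq_iff)
qed

lemma laplacian_mult_vec_nth:
  fixes W :: "real^'n::finite^'n"
  shows "(laplacian W *v x)$i = (\<Sum>j\<in>UNIV. W$i$j * (x$i - x$j))"
proof -
  have "(laplacian W *v x)$i = (\<Sum>j\<in>UNIV. (if i = j then (\<Sum>k\<in>UNIV - {i}. W$i$k) else - W$i$j) * x$j)"
    by (simp add: laplacian_def matrix_vector_mult_def)
  also have "\<dots> = (\<Sum>k\<in>UNIV - {i}. W$i$k) * x$i + (\<Sum>j\<in>UNIV - {i}. - W$i$j * x$j)"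
    by (subst sum.remove[of UNIV i]) (auto intro!: sum.cong)
  also have "\<dots> = (\<Sum>j\<in>UNIV - {i}. W$i$j * (x$i - x$j))"
    by (simp add: sum_distrib_right sum_distrib_left sum.distrib[symmetric] algebra_simps sum_negf)
  also have "\<dots> = (\<Sum>j\<in>UNIV. W$i$j * (x$i - x$j))"
    by (rule sum.mono_neutral_left) auto
  finally show ?thesis .
qed

lemma laplacian_sum_mult_vec:
  fixes W :: "real^'n::finite^'n"
  assumes sym: "\<forall>i j. W$i$j = W$j$i"
  shows "(\<Sum>i\<in>UNIV. (laplacian W *v x)$i) = 0"
proof -
  have "(\<Sum>i\<in>UNIV. \<Sum>j\<in>UNIV. W$i$j * x$j) = (\<Sum>i\<in>UNIV. \<Sum>j\<in>UNIV. W$i$j * x$i)"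
    by (subst sum.swap) (simp add: sym)
  thus ?thesis by (simp add: laplacian_mult_vec_nth algebra_simps sum_subtractf)
qed

lemma laplacian_quadratic_form:
  fixes W :: "real^'n::finite^'n"
  assumes sym: "\<forall>i j. W$i$j = W$j$i"
  shows "x \<bullet> (laplacian W *v x) = (\<Sum>i\<in>UNIV. \<Sum>j\<in>UNIV. W$i$j * (x$i - x$j)^2) / 2"
proof -
  have A: "x \<bullet> (laplacian W *v x) = (\<Sum>i\<in>UNIV. \<Sum>j\<in>UNIV. W$i$j * x$i * (x$i - x$j))"
    by (simp add: inner_vec_def laplacian_mult_vec_nth sum_distrib_left algebra_simps)
  also have "\<dots> = (\<Sum>i\<in>UNIV. \<Sum>j\<in>UNIV. W$i$j * x$j * (x$j - x$i))"
    by (subst sum.swap) (simp add: sym)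
  finally have B: "x \<bullet> (laplacian W *v x) = (\<Sum>i\<in>UNIV. \<Sum>j\<in>UNIV. W$i$j * x$j * (x$j - x$i))" .
  have "2 * (x \<bullet> (laplacian W *v x)) =
      (\<Sum>i\<in>UNIV. \<Sum>j\<in>UNIV. W$i$j * x$i * (x$i - x$j) + W$i$j * x$j * (x$j - x$i))"
    using A B by (simp add: sum.distrib)
  also have "\<dots> = (\<Sum>i\<in>UNIV. \<Sum>j\<in>UNIV. W$i$j * (x$i - x$j)^2)"
    by (intro sum.cong refl) (simp add: power2_eq_square algebra_simps)
  finally show ?thesis by simp
qed

section \<open>The network near the equilibrium\<close>

locale power_network =
  fixes B :: "real^'e::finite^('g::finite + 'l::finite)"
    and gamma :: "real^'e"
    and mm a q :: "real^'g"
    and LC :: "real^'g^'g"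
    and etabar :: "real^'e"
    and lam :: real
  assumes B_inc: "incidence_matrix B"
    and B_conn: "connected_incidence B"
    and gamma_pos: "\<forall>k. 0 < gamma$k"
    and M_pos: "\<forall>i. 0 < mm$i"
    and A_pos: "\<forall>i. 0 < a$i"
    and q_pos: "\<forall>i. 0 < q$i"
    and LC_lap: "comm_laplacian LC"
    and etabar_im: "etabar \<in> range (\<lambda>th. transpose B *v th)"
    and etabar_Omega: "etabar \<in> Omega"
    and etabar_eq: "0 = - ((rows_G B ** diag_mat gamma) *v vsin etabar) - lam *s (\<chi> i. 1 / q$i)"
begin

definition flow :: "real^'e \<Rightarrow> real^'e" where
  "flow eta = (\<chi> e. gamma$e * sin (eta$e))"

definition load_laplacian :: "real^'e \<Rightarrow> real^'l^'l" where
  "load_laplacian eta = rows_L B ** Gamma' gamma eta ** transpose (rows_L B)"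

definition q_inv :: "real^'g" where
  "q_inv = (\<chi> i. 1 / q$i)"

definition u_star :: "real^'g" where
  "u_star = - (lam *s q_inv)"

definition xi_eq :: "real^'g" where
  "xi_eq = diag_mat q *v u_star"

definition gamma_min :: real where
  "gamma_min = Min (range (\<lambda>e. gamma$e))"

definition gamma_max :: real where
  "gamma_max = Max (range (\<lambda>e. gamma$e))"

definition radius :: real where
  "radius = Min (range (\<lambda>e. pi/2 - \<bar>etabar$e\<bar>)) / 2"

definition angle_bound :: real where
  "angle_bound = pi/2 - radius"

definition kappa :: real where
  "kappa = cos angle_bound"

definition c_load :: real where
  "c_load = (SOME c. c > 0 \<and> (\<forall>x. c * norm x \<le> norm (transpose (rows_L B) *v x)))"

definition coercivity :: real where
  "coercivity = gamma_min * kappa * c_load^2"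

lemma xi_eq_eq: "xi_eq = (\<chi> i. - lam)"
proof -
  have "q$i \<noteq> 0" for i using q_pos by (metis less_irrefl)
  thus ?thesis by (simp add: xi_eq_def u_star_def q_inv_def diag_mat_mult_vec vec_eq_iff)
qed

lemma q_inv_mult_xi_eq: "diag_mat q_inv *v xi_eq = u_star"
  by (simp add: xi_eq_eq u_star_def q_inv_def diag_mat_mult_vec vec_eq_iff)

lemma gamma_min_le: "gamma_min \<le> gamma$e"
  unfolding gamma_min_def by (rule Min_le) auto

lemma gamma_min_pos: "gamma_min > 0"
proof -
  have "gamma_min \<in> range (\<lambda>e. gamma$e)" unfolding gamma_min_def by (rule Min_in) auto
  thus ?thesis using gamma_pos by auto
qed

lemma gamma_max_ge: "gamma$e \<le> gamma_max"
  unfolding gamma_max_def by (rule Max_ge) auto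

lemma gamma_max_pos: "gamma_max > 0"
  using gamma_pos gamma_max_ge[of undefined] by (metis less_le_trans)

lemma radius_le: "2 * radius \<le> pi/2 - \<bar>etabar$e\<bar>"
proof -
  have "Min (range (\<lambda>e. pi/2 - \<bar>etabar$e\<bar>)) \<le> pi/2 - \<bar>etabar$e\<bar>" by (rule Min_le) auto
  thus ?thesis by (simp add: radius_def)
qed

lemma radius_pos: "radius > 0"
proof -
  have "Min (range (\<lambda>e. pi/2 - \<bar>etabar$e\<bar>)) \<in> range (\<lambda>e. pi/2 - \<bar>etabar$e\<bar>)"
    by (rule Min_in) auto
  thus ?thesis using etabar_Omega by (auto simp: Omega_def radius_def)
qed

lemma angle_bound_lt: "angle_bound < pi/2"
  using radius_pos by (simp add: angle_bound_def)

lemma kappa_pos: "kappa > 0"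
proof -
  have "angle_bound > 0"
    using radius_le[of undefined] radius_pos by (simp add: angle_bound_def)
  thus ?thesis unfolding kappa_def using angle_bound_lt by (intro cos_gt_zero_pi) auto
qed

lemma abs_le_angle_bound:
  assumes "eta \<in> cball etabar radius"
  shows "\<bar>eta$e\<bar> \<le> angle_bound"
proof -
  have "\<bar>eta$e - etabar$e\<bar> \<le> norm (eta - etabar)"
    using component_le_norm_cart[of "eta - etabar" e] by simp
  also have "\<dots> \<le> radius" using assms by (simp add: dist_norm norm_minus_commute)
  finally show ?thesis using radius_le[of e] abs_triangle_ineq[of "eta$e - etabar$e" "etabar$e"]
    by (simp add: angle_bound_def)
qed

lemma abs_etabar_le_angle_bound: "\<bar>etabar$e\<bar> \<le> angle_bound"
  using abs_le_angle_bound[of etabar] radius_pos by simp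

lemma kappa_le_cos: "eta \<in> cball etabar radius \<Longrightarrow> kappa \<le> cos (eta$e)"
  unfolding kappa_def using abs_le_angle_bound cos_ge_cos_of_abs_le angle_bound_lt by blast

lemma c_load: "c_load > 0" "c_load * norm x \<le> norm (transpose (rows_L B) *v x)"
proof -
  obtain c where "c > 0" "\<And>x. c * norm x \<le> norm (transpose (rows_L B) *v x)"
    using linear_inj_bounded_below_pos[OF matrix_vector_mul_linear
        incidence_matrix_rows_L_transpose_inj[OF B_inc B_conn]] by blast
  hence "\<exists>c. c > 0 \<and> (\<forall>x. c * norm x \<le> norm (transpose (rows_L B) *v x))" by blast
  hence "c_load > 0 \<and> (\<forall>x. c_load * norm x \<le> norm (transpose (rows_L B) *v x))"
    unfolding c_load_def by (rule someI_ex)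
  thus "c_load > 0" "c_load * norm x \<le> norm (transpose (rows_L B) *v x)" by auto
qed

lemma coercivity_pos: "coercivity > 0"
  using gamma_min_pos kappa_pos c_load by (simp add: coercivity_def)

lemma load_laplacian_coercive:
  assumes "eta \<in> cball etabar radius"
  shows "coercivity * (norm x)^2 \<le> x \<bullet> (load_laplacian eta *v x)"
proof -
  let ?u = "transpose (rows_L B) *v x"
  have "gamma_min * kappa * (norm ?u)^2 = (\<Sum>e\<in>UNIV. gamma_min * kappa * (?u$e)^2)"
    by (simp add: norm_pow2_eq_sum sum_distrib_left)
  also have "\<dots> \<le> (\<Sum>e\<in>UNIV. gamma$e * cos (eta$e) * (?u$e)^2)"
  proof (rule sum_mono)
    fix e
    have "gamma_min * kappa \<le> gamma$e * cos (eta$e)"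
      using gamma_min_le[of e] kappa_le_cos[OF assms, of e] gamma_min_pos kappa_pos
      by (intro mult_mono) auto
    thus "gamma_min * kappa * (?u$e)^2 \<le> gamma$e * cos (eta$e) * (?u$e)^2"
      by (intro mult_right_mono) auto
  qed
  also have "\<dots> = ?u \<bullet> (Gamma' gamma eta *v ?u)"
    by (simp add: Gamma'_eq_diag_mat diag_mat_mult_vec inner_vec_def power2_eq_square algebra_simps)
  also have "\<dots> = x \<bullet> (load_laplacian eta *v x)"
    by (simp add: load_laplacian_def inner_matrix_vector_mult flip: matrix_vector_mul_assoc)
  finally have *: "gamma_min * kappa * (norm ?u)^2 \<le> x \<bullet> (load_laplacian eta *v x)" .
  have "(c_load * norm x)^2 \<le> (norm ?u)^2" using c_load by (intro power_mono) auto
  hence "gamma_min * kappa * (c_load * norm x)^2 \<le> gamma_min * kappa * (norm ?u)^2"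
    using gamma_min_pos kappa_pos by (intro mult_left_mono) auto
  thus ?thesis using * by (simp add: coercivity_def power_mult_distrib algebra_simps)
qed

lemma load_laplacian_symmetric: "transpose (load_laplacian eta) = load_laplacian eta"
  by (simp add: load_laplacian_def matrix_transpose_mul Gamma'_eq_diag_mat transpose_diag_mat
      matrix_mul_assoc)

lemma load_laplacian_inverse:
  assumes "eta \<in> cball etabar radius"
  shows "load_laplacian eta ** transpose (matrix_inv (load_laplacian eta)) = mat 1"
proof -
  let ?N = "load_laplacian eta"
  have "inj ((*v) ?N)"
  proof (rule linear_injective_0[OF matrix_vector_mul_linear, THEN iffD2], intro allI impI)
    fix x assume "?N *v x = 0"
    hence "coercivity * (norm x)^2 \<le> 0" using load_laplacian_coercive[OF assms, of x] by simp
    thus "x = 0" using coercivity_pos by (simp add: mult_le_0_iff)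
  qed
  then obtain A' where "A' ** ?N = mat 1" using matrix_left_invertible_injective by blast
  hence "?N ** A' = mat 1 \<and> A' ** ?N = mat 1" using matrix_left_right_inverse by blast
  hence "?N ** matrix_inv ?N = mat 1 \<and> matrix_inv ?N ** ?N = mat 1"
    unfolding matrix_inv_def by (rule someI)
  hence "transpose (matrix_inv ?N ** ?N) = mat 1" by simp
  thus ?thesis by (simp add: matrix_transpose_mul load_laplacian_symmetric)
qed

lemma diag_gamma_vsin: "diag_mat gamma *v vsin eta = flow eta"
  by (simp add: diag_mat_mult_vec vsin_def flow_def)

lemma rows_G_gamma_vsin: "(rows_G B ** diag_mat gamma) *v vsin eta = rows_G B *v flow eta"
  by (simp add: diag_gamma_vsin flip: matrix_vector_mul_assoc)

lemma rows_G_flow_etabar: "rows_G B *v flow etabar = - (lam *s q_inv)"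
proof -
  have "- (rows_G B *v flow etabar) = lam *s q_inv"
    using etabar_eq unfolding rows_G_gamma_vsin q_inv_def by (simp add: eq_neg_iff_add_eq_0)
  thus ?thesis by (metis minus_minus)
qed

definition load_frequency :: "real^'e \<Rightarrow> real^'g \<Rightarrow> real^'l" where
  "load_frequency eta w = - (transpose (matrix_inv (load_laplacian eta))
     *v (rows_L B *v (Gamma' gamma eta *v (transpose (rows_G B) *v w))))"

text \<open>\<open>B\<^sub>S(\<eta>)\<^sup>T \<omega>\<^sub>G = B\<^sup>T \<omega>\<close>, where \<open>\<omega>\<close> extends the generator frequencies by the load frequencies
  determined by the algebraic constraint.\<close>
definition lifted_frequency :: "real^'e \<Rightarrow> real^'g \<Rightarrow> real^('g + 'l)" where
  "lifted_frequency eta w = (\<chi> n. case n of Inl i \<Rightarrow> w$i | Inr j \<Rightarrow> load_frequency eta w $ j)"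

lemma lifted_frequency_Inl: "(\<chi> i. lifted_frequency eta w $ Inl i) = w"
  by (simp add: lifted_frequency_def vec_eq_iff)

lemma transpose_B_S_eq_lifted:
  "transpose (B_S (rows_G B) (rows_L B) gamma eta) *v w = transpose B *v lifted_frequency eta w"
proof -
  have "(\<chi> j. lifted_frequency eta w $ Inr j) = load_frequency eta w"
    by (simp add: lifted_frequency_def vec_eq_iff)
  thus ?thesis
    by (simp add: transpose_B_S_mult_vec transpose_mult_vec_rows lifted_frequency_Inl
        load_frequency_def load_laplacian_def matrix_vector_mult_uminus algebra_simps)
qed

lemma rows_L_Gamma'_B_S_eq_0:
  assumes "eta \<in> cball etabar radius"
  shows "rows_L B *v (Gamma' gamma eta *v (transpose (B_S (rows_G B) (rows_L B) gamma eta) *v w)) = 0"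
proof -
  let ?N = "load_laplacian eta"
  let ?y = "rows_L B *v (Gamma' gamma eta *v (transpose (rows_G B) *v w))"
  have "rows_L B *v (Gamma' gamma eta *v (transpose (B_S (rows_G B) (rows_L B) gamma eta) *v w))
        = ?y - ?N *v (transpose (matrix_inv ?N) *v ?y)"
    by (simp add: transpose_B_S_mult_vec load_laplacian_def matrix_vector_mult_diff_distrib
        matrix_vector_mul_assoc matrix_mul_assoc)
  also have "?N *v (transpose (matrix_inv ?N) *v ?y) = ?y"
    by (subst matrix_vector_mul_assoc) (simp only: load_laplacian_inverse[OF assms] matrix_vector_mul_lid)
  finally show ?thesis by simp
qed

lemma norm_Gamma'_mult_vec_le: "norm (Gamma' gamma eta *v u) \<le> gamma_max * norm u"
proof -
  have "norm (Gamma' gamma eta *v u) \<le> norm (gamma_max *\<^sub>R u)"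
  proof (rule norm_le_componentwise_cart)
    fix e
    have "\<bar>gamma$e * cos (eta$e) * u$e\<bar> = gamma$e * \<bar>cos (eta$e)\<bar> * \<bar>u$e\<bar>"
      using gamma_pos[rule_format, of e] by (simp add: abs_mult)
    also have "\<dots> \<le> gamma_max * 1 * \<bar>u$e\<bar>"
      using gamma_max_ge[of e] gamma_pos abs_cos_le_one gamma_max_pos
      by (intro mult_right_mono mult_mono) auto
    finally show "norm ((Gamma' gamma eta *v u)$e) \<le> norm ((gamma_max *\<^sub>R u)$e)"
      using gamma_max_pos by (simp add: Gamma'_eq_diag_mat diag_mat_mult_vec abs_mult)
  qed
  also have "\<dots> = gamma_max * norm u" using gamma_max_pos by simp
  finally show ?thesis .
qed

lemma norm_load_inverse_mult_vec_le:
  assumes "eta \<in> cball etabar radius"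
  shows "coercivity * norm (transpose (matrix_inv (load_laplacian eta)) *v y) \<le> norm y"
proof -
  let ?x = "transpose (matrix_inv (load_laplacian eta)) *v y"
  have "load_laplacian eta *v ?x = y"
    using load_laplacian_inverse[OF assms] by (simp add: matrix_vector_mul_assoc)
  hence "coercivity * (norm ?x)^2 \<le> ?x \<bullet> y" using load_laplacian_coercive[OF assms, of ?x] by simp
  also have "\<dots> \<le> norm ?x * norm y" by (rule norm_cauchy_schwarz)
  finally have "norm ?x * (coercivity * norm ?x) \<le> norm ?x * norm y"
    by (simp add: power2_eq_square algebra_simps)
  thus ?thesis
    by (cases "norm ?x = 0") (use coercivity_pos in \<open>auto simp: mult_le_cancel_left_pos\<close>)
qed

lemma transpose_B_S_bounded:
  "\<exists>K. \<forall>eta\<in>cball etabar radius. \<forall>w.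
     norm (transpose (B_S (rows_G B) (rows_L B) gamma eta) *v w) \<le> K * norm w"
proof -
  obtain K1 where K1: "\<And>x. norm (transpose (rows_G B) *v x) \<le> norm x * K1" "K1 > 0"
    using bounded_linear.pos_bounded[OF matrix_vector_mul_bounded_linear] by blast
  obtain K2 where K2: "\<And>x. norm (transpose (rows_L B) *v x) \<le> norm x * K2" "K2 > 0"
    using bounded_linear.pos_bounded[OF matrix_vector_mul_bounded_linear] by blast
  obtain K3 where K3: "\<And>x. norm (rows_L B *v x) \<le> norm x * K3" "K3 > 0"
    using bounded_linear.pos_bounded[OF matrix_vector_mul_bounded_linear] by blast
  define K where "K = K3 * gamma_max * K1 / coercivity"
  show ?thesis
  proof (intro exI[of _ "K1 + K2 * K"] ballI allI)
    fix eta w assume eta: "eta \<in> cball etabar radius"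
    let ?u = "transpose (rows_G B) *v w"
    let ?y = "rows_L B *v (Gamma' gamma eta *v ?u)"
    let ?x = "transpose (matrix_inv (load_laplacian eta)) *v ?y"
    have "norm ?y \<le> norm (Gamma' gamma eta *v ?u) * K3" by (rule K3)
    also have "\<dots> \<le> gamma_max * norm ?u * K3"
      using norm_Gamma'_mult_vec_le K3(2) by (intro mult_right_mono) auto
    also have "\<dots> \<le> gamma_max * (norm w * K1) * K3" using K1 K3(2) gamma_max_pos
      by (intro mult_right_mono mult_left_mono) auto
    finally have "coercivity * norm ?x \<le> K3 * gamma_max * K1 * norm w"
      using norm_load_inverse_mult_vec_le[OF eta, of ?y] by (simp add: algebra_simps)
    hence x: "norm ?x \<le> K * norm w" using coercivity_pos by (simp add: K_def field_simps)
    have "transpose (B_S (rows_G B) (rows_L B) gamma eta) *v w = ?u - transpose (rows_L B) *v ?x"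
      by (simp add: transpose_B_S_mult_vec load_laplacian_def)
    hence "norm (transpose (B_S (rows_G B) (rows_L B) gamma eta) *v w)
           \<le> norm ?u + norm (transpose (rows_L B) *v ?x)"
      by (simp add: norm_triangle_ineq4)
    also have "\<dots> \<le> norm w * K1 + norm ?x * K2" using K1 K2 by (intro add_mono) auto
    also have "\<dots> \<le> norm w * K1 + (K * norm w) * K2"
      using x K2 by (simp add: mult_right_mono)
    finally show "norm (transpose (B_S (rows_G B) (rows_L B) gamma eta) *v w) \<le> (K1 + K2 * K) * norm w"
      by (simp add: algebra_simps)
  qed
qed

definition comm_weights :: "real^'g^'g" where
  "comm_weights = (SOME W. (\<forall>i j. W$i$j = W$j$i) \<and> (\<forall>i j. 0 \<le> W$i$j) \<and> (\<forall>i. W$i$i = 0)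
        \<and> (\<forall>x y. (x, y) \<in> {(i, j). 0 < W$i$j}\<^sup>*) \<and> LC = laplacian W)"

lemma comm_weights:
  "\<forall>i j. comm_weights$i$j = comm_weights$j$i" "\<forall>i j. 0 \<le> comm_weights$i$j"
  "\<forall>x y. (x, y) \<in> {(i, j). 0 < comm_weights$i$j}\<^sup>*" "LC = laplacian comm_weights"
proof -
  have "(\<forall>i j. comm_weights$i$j = comm_weights$j$i) \<and> (\<forall>i j. 0 \<le> comm_weights$i$j)
        \<and> (\<forall>i. comm_weights$i$i = 0) \<and> (\<forall>x y. (x, y) \<in> {(i, j). 0 < comm_weights$i$j}\<^sup>*)
        \<and> LC = laplacian comm_weights"
    unfolding comm_weights_def using LC_lap unfolding comm_laplacian_def by (rule someI_ex)
  thus "\<forall>i j. comm_weights$i$j = comm_weights$j$i" "\<forall>i j. 0 \<le> comm_weights$i$j"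
    "\<forall>x y. (x, y) \<in> {(i, j). 0 < comm_weights$i$j}\<^sup>*" "LC = laplacian comm_weights"
    by auto
qed

lemma LC_quadratic_form:
  "x \<bullet> (LC *v x) = (\<Sum>i\<in>UNIV. \<Sum>j\<in>UNIV. comm_weights$i$j * (x$i - x$j)^2) / 2"
  using laplacian_quadratic_form[OF comm_weights(1)] comm_weights(4) by simp

lemma LC_nonneg: "0 \<le> x \<bullet> (LC *v x)"
  unfolding LC_quadratic_form using comm_weights(2) by (auto intro!: sum_nonneg)

lemma LC_edge_le: "comm_weights$i$j * (x$i - x$j)^2 \<le> 2 * (x \<bullet> (LC *v x))"
proof -
  have "comm_weights$i$j * (x$i - x$j)^2 \<le> (\<Sum>j\<in>UNIV. comm_weights$i$j * (x$i - x$j)^2)"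
    by (rule member_le_sum) (use comm_weights(2) in auto)
  also have "\<dots> \<le> (\<Sum>i\<in>UNIV. \<Sum>j\<in>UNIV. comm_weights$i$j * (x$i - x$j)^2)"
    by (rule member_le_sum[of i]) (use comm_weights(2) in \<open>auto intro!: sum_nonneg\<close>)
  finally show ?thesis unfolding LC_quadratic_form by simp
qed

lemma LC_sum: "(\<Sum>i\<in>UNIV. (LC *v x)$i) = 0"
  using laplacian_sum_mult_vec[OF comm_weights(1)] comm_weights(4) by simp

definition kinetic_energy :: "real^'g \<Rightarrow> real" where
  "kinetic_energy w = (\<Sum>i\<in>UNIV. mm$i * (w$i)^2) / 2"

definition potential_energy :: "real^'e \<Rightarrow> real" where
  "potential_energy eta =
     (\<Sum>e\<in>UNIV. gamma$e * (cos (etabar$e) - cos (eta$e) - sin (etabar$e) * (eta$e - etabar$e)))"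

definition controller_energy :: "real^'g \<Rightarrow> real" where
  "controller_energy x = (\<Sum>i\<in>UNIV. (x$i - xi_eq$i)^2) / 2"

definition dissipation :: "real^'g \<Rightarrow> real^'g \<Rightarrow> real" where
  "dissipation w x = (\<Sum>i\<in>UNIV. a$i * (w$i)^2) + x \<bullet> (LC *v x)"

definition m_min :: real where
  "m_min = Min (range (\<lambda>i. mm$i))"

definition a_min :: real where
  "a_min = Min (range (\<lambda>i. a$i))"

lemma m_min_le: "m_min \<le> mm$i"
  unfolding m_min_def by (rule Min_le) auto

lemma a_min_le: "a_min \<le> a$i"
  unfolding a_min_def by (rule Min_le) auto

lemma m_min_pos: "m_min > 0"
proof -
  have "m_min \<in> range (\<lambda>i. mm$i)" unfolding m_min_def by (rule Min_in) auto
  thus ?thesis using M_pos by auto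
qed

lemma a_min_pos: "a_min > 0"
proof -
  have "a_min \<in> range (\<lambda>i. a$i)" unfolding a_min_def by (rule Min_in) auto
  thus ?thesis using A_pos by auto
qed

lemma kinetic_energy_ge: "m_min / 2 * (norm w)^2 \<le> kinetic_energy w"
proof -
  have "(\<Sum>i\<in>UNIV. m_min * (w$i)^2) = m_min * (norm w)^2"
    by (simp add: norm_pow2_eq_sum sum_distrib_left)
  hence "m_min / 2 * (norm w)^2 = (\<Sum>i\<in>UNIV. m_min * (w$i)^2) / 2" by simp
  also have "\<dots> \<le> (\<Sum>i\<in>UNIV. mm$i * (w$i)^2) / 2"
    using m_min_le by (intro divide_right_mono sum_mono mult_right_mono) auto
  finally show ?thesis by (simp add: kinetic_energy_def)
qed

lemma kinetic_energy_nonneg: "0 \<le> kinetic_energy w"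
  unfolding kinetic_energy_def using M_pos by (auto intro!: sum_nonneg mult_nonneg_nonneg simp: less_imp_le)

lemma controller_energy_eq: "controller_energy x = (norm (x - xi_eq))^2 / 2"
  by (simp add: controller_energy_def norm_pow2_eq_sum)

lemma controller_energy_nonneg: "0 \<le> controller_energy x"
  by (simp add: controller_energy_eq)

lemma potential_energy_ge:
  assumes "eta \<in> cball etabar radius"
  shows "gamma_min * kappa / 2 * (dist eta etabar)^2 \<le> potential_energy eta"
proof -
  have "gamma_min * kappa / 2 * (dist eta etabar)^2
        = (\<Sum>e\<in>UNIV. gamma_min * (kappa / 2 * (eta$e - etabar$e)^2))"
    by (simp add: dist_norm norm_pow2_eq_sum sum_distrib_left algebra_simps)
  also have "\<dots> \<le> potential_energy eta" unfolding potential_energy_def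
  proof (rule sum_mono)
    fix e
    have "kappa / 2 * (eta$e - etabar$e)^2
          \<le> cos (etabar$e) - cos (eta$e) - sin (etabar$e) * (eta$e - etabar$e)"
      unfolding kappa_def
      by (rule cos_bregman_lower_bound[OF angle_bound_lt abs_le_angle_bound[OF assms]
            abs_etabar_le_angle_bound])
    moreover have "0 \<le> kappa / 2 * (eta$e - etabar$e)^2" using kappa_pos by simp
    ultimately show "gamma_min * (kappa / 2 * (eta$e - etabar$e)^2)
      \<le> gamma$e * (cos (etabar$e) - cos (eta$e) - sin (etabar$e) * (eta$e - etabar$e))"
      using gamma_min_le[of e] gamma_min_pos by (intro mult_mono) auto
  qed
  finally show ?thesis .
qed

lemma potential_energy_nonneg: "eta \<in> cball etabar radius \<Longrightarrow> 0 \<le> potential_energy eta"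
  using potential_energy_ge[of eta] gamma_min_pos kappa_pos
  by (meson order_trans mult_nonneg_nonneg zero_le_power2 less_imp_le divide_nonneg_pos zero_less_numeral)

lemma dissipation_ge: "a_min * (norm w)^2 \<le> dissipation w x"
proof -
  have "a_min * (norm w)^2 = (\<Sum>i\<in>UNIV. a_min * (w$i)^2)"
    by (simp add: norm_pow2_eq_sum sum_distrib_left)
  also have "\<dots> \<le> (\<Sum>i\<in>UNIV. a$i * (w$i)^2)"
    using a_min_le by (intro sum_mono mult_right_mono) auto
  finally show ?thesis unfolding dissipation_def using LC_nonneg[of x] by linarith
qed

lemma dissipation_ge_LC: "x \<bullet> (LC *v x) \<le> dissipation w x"
proof -
  have "0 \<le> (\<Sum>i\<in>UNIV. a$i * (w$i)^2)"
    using A_pos by (auto intro!: sum_nonneg mult_nonneg_nonneg simp: less_imp_le)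
  thus ?thesis unfolding dissipation_def by linarith
qed

lemma dissipation_nonneg: "0 \<le> dissipation w x"
  using dissipation_ge[of w x] a_min_pos by (meson order_trans mult_nonneg_nonneg zero_le_power2 less_imp_le)

lemma kinetic_energy_has_derivative:
  assumes "(f has_vector_derivative f') (at x within S)"
  shows "((\<lambda>s. kinetic_energy (f s)) has_real_derivative f x \<bullet> (diag_mat mm *v f')) (at x within S)"
proof -
  have "((\<lambda>s. kinetic_energy (f s)) has_real_derivative
      (\<Sum>i\<in>UNIV. mm$i * (of_nat 2 * (f' $ i * f x $ i ^ (2 - Suc 0)))) / 2) (at x within S)"
    unfolding kinetic_energy_def
    by (intro DERIV_cdivide DERIV_sum DERIV_cmult DERIV_power has_real_derivative_vec_nth assms)
  moreover have "(\<Sum>i\<in>UNIV. mm$i * (of_nat 2 * (f' $ i * f x $ i ^ (2 - Suc 0)))) / 2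
      = f x \<bullet> (diag_mat mm *v f')"
    by (simp add: diag_mat_mult_vec inner_vec_def sum_divide_distrib algebra_simps)
  ultimately show ?thesis by simp
qed

lemma potential_energy_has_derivative:
  assumes "(f has_vector_derivative f') (at x within S)"
  shows "((\<lambda>s. potential_energy (f s)) has_real_derivative (flow (f x) - flow etabar) \<bullet> f')
    (at x within S)"
proof -
  have "((\<lambda>s. potential_energy (f s)) has_real_derivative
      (\<Sum>e\<in>UNIV. gamma$e * (0 - (- sin (f x $ e) * f' $ e) - sin (etabar$e) * (f' $ e - 0))))
      (at x within S)"
    unfolding potential_energy_def
    by (intro DERIV_sum DERIV_cmult DERIV_diff DERIV_const DERIV_chain2[OF DERIV_cos]
        has_real_derivative_vec_nth assms)
  moreover have "(\<Sum>e\<in>UNIV. gamma$e * (0 - (- sin (f x $ e) * f' $ e) - sin (etabar$e) * (f' $ e - 0)))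
      = (flow (f x) - flow etabar) \<bullet> f'"
    by (simp add: flow_def inner_vec_def algebra_simps)
  ultimately show ?thesis by simp
qed

lemma controller_energy_has_derivative:
  assumes "(f has_vector_derivative f') (at x within S)"
  shows "((\<lambda>s. controller_energy (f s)) has_real_derivative (f x - xi_eq) \<bullet> f') (at x within S)"
proof -
  have "((\<lambda>s. controller_energy (f s)) has_real_derivative
      (\<Sum>i\<in>UNIV. of_nat 2 * ((f' $ i - 0) * (f x $ i - xi_eq $ i) ^ (2 - Suc 0))) / 2) (at x within S)"
    unfolding controller_energy_def
    by (intro DERIV_cdivide DERIV_sum DERIV_power DERIV_diff DERIV_const
        has_real_derivative_vec_nth assms)
  moreover have "(\<Sum>i\<in>UNIV. of_nat 2 * ((f' $ i - 0) * (f x $ i - xi_eq $ i) ^ (2 - Suc 0))) / 2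
      = (f x - xi_eq) \<bullet> f'"
    by (simp add: inner_vec_def sum_divide_distrib algebra_simps) (rule sum.cong; simp add: field_simps)
  ultimately show ?thesis by simp
qed

lemma flow_strongly_monotone:
  assumes "eta \<in> cball etabar radius"
  shows "gamma_min * kappa * (norm (eta - etabar))^2 \<le> (eta - etabar) \<bullet> (flow eta - flow etabar)"
proof -
  let ?v = "eta - etabar"
  have "gamma_min * kappa * (norm ?v)^2 = (\<Sum>e\<in>UNIV. gamma_min * (kappa * (?v$e)^2))"
    by (simp add: norm_pow2_eq_sum sum_distrib_left algebra_simps)
  also have "\<dots> \<le> (\<Sum>e\<in>UNIV. gamma$e * (?v$e * (sin (eta $ e) - sin (etabar $ e))))"
  proof (rule sum_mono)
    fix e
    have "kappa * (?v$e)^2 \<le> ?v$e * (sin (eta $ e) - sin (etabar $ e))"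
      unfolding kappa_def
      using sin_strongly_monotone[OF angle_bound_lt abs_le_angle_bound[OF assms]
          abs_etabar_le_angle_bound] by simp
    moreover have "0 \<le> kappa * (?v$e)^2" using kappa_pos by simp
    ultimately show "gamma_min * (kappa * (?v$e)^2) \<le> gamma$e * (?v$e * (sin (eta $ e) - sin (etabar $ e)))"
      using gamma_min_le[of e] gamma_min_pos gamma_pos[rule_format, of e] by (rule_tac mult_mono) auto
  qed
  also have "\<dots> = ?v \<bullet> (flow eta - flow etabar)"
    by (simp add: flow_def inner_vec_def algebra_simps)
  finally show ?thesis .
qed

text \<open>The pointwise identity behind \<open>dV/dt = - dissipation\<close>; the terms in \<open>\<lambda>\<close> cancel because
  \<open>B\<^sub>G \<Gamma> sin \<eta>\<^sup>* = -\<lambda> Q\<^sup>-\<^sup>1 \<one>\<close> and \<open>\<one>\<^sup>T L\<^sub>C = 0\<close>.\<close>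
lemma lyapunov_derivative_identity:
  assumes We: "diag_mat mm *v W = - (diag_mat a *v w) - rows_G B *v flow eta + diag_mat q_inv *v x"
    and inv: "rows_L B *v flow eta = rows_L B *v flow etabar"
    and zw: "(\<chi> i. z$Inl i) = w"
  shows "w \<bullet> (diag_mat mm *v W) + (flow eta - flow etabar) \<bullet> (transpose B *v z)
         + (x - xi_eq) \<bullet> (- (LC *v x) - diag_mat q_inv *v w) = - dissipation w x"
proof -
  have 1: "(flow eta - flow etabar) \<bullet> (transpose B *v z)
           = (rows_G B *v flow eta) \<bullet> w - (rows_G B *v flow etabar) \<bullet> w"
  proof -
    have "(flow eta - flow etabar) \<bullet> (transpose B *v z) = (B *v (flow eta - flow etabar)) \<bullet> z"
      by (simp add: inner_matrix_vector_mult)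
    also have "\<dots> = (rows_G B *v (flow eta - flow etabar)) \<bullet> w
                     + (rows_L B *v (flow eta - flow etabar)) \<bullet> (\<chi> j. z $ Inr j)"
      by (simp add: inner_mult_vec_rows zw)
    finally show ?thesis using inv by (simp add: matrix_vector_mult_diff_distrib inner_diff_left)
  qed
  have 2: "(rows_G B *v flow etabar) \<bullet> w = - lam * (q_inv \<bullet> w)"
    by (simp add: rows_G_flow_etabar inner_vec_def sum_distrib_left algebra_simps)
  have 3: "xi_eq \<bullet> (LC *v x) = 0"
  proof -
    have "xi_eq \<bullet> (LC *v x) = - lam * (\<Sum>i\<in>UNIV. (LC *v x)$i)"
      by (simp add: xi_eq_eq inner_vec_def sum_distrib_left)
    thus ?thesis using LC_sum by simp
  qed
  have 4: "xi_eq \<bullet> (diag_mat q_inv *v w) = - lam * (q_inv \<bullet> w)"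
    by (simp add: xi_eq_eq inner_vec_def diag_mat_mult_vec sum_distrib_left)
  have 5: "w \<bullet> (diag_mat a *v w) = (\<Sum>i\<in>UNIV. a$i * (w$i)^2)"
    by (simp add: diag_mat_mult_vec inner_vec_def power2_eq_square algebra_simps)
  have "w \<bullet> (diag_mat mm *v W) = - (w \<bullet> (diag_mat a *v w)) - w \<bullet> (rows_G B *v flow eta)
          + w \<bullet> (diag_mat q_inv *v x)"
    by (simp add: We inner_diff_right inner_add_right)
  moreover have "w \<bullet> (diag_mat q_inv *v x) = x \<bullet> (diag_mat q_inv *v w)"
    by (rule inner_diag_mat_commute)
  moreover have "(x - xi_eq) \<bullet> (- (LC *v x) - diag_mat q_inv *v w) =
       - (x \<bullet> (LC *v x)) + xi_eq \<bullet> (LC *v x) - x \<bullet> (diag_mat q_inv *v w)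
       + xi_eq \<bullet> (diag_mat q_inv *v w)"
    by (simp add: inner_diff_right inner_diff_left inner_minus_right)
  moreover have "w \<bullet> (rows_G B *v flow eta) = (rows_G B *v flow eta) \<bullet> w" by (rule inner_commute)
  ultimately show ?thesis using 1 2 3 4 5 unfolding dissipation_def by linarith
qed

lemma small_energy_near_equilibrium:
  obtains \<delta> where "\<delta> > 0"
    "\<And>eta w x. dist eta etabar < \<delta> \<Longrightarrow> dist w 0 < \<delta> \<Longrightarrow> dist x xi_eq < \<delta> \<Longrightarrow>
       kinetic_energy w + potential_energy eta + controller_energy x < gamma_min * kappa / 2 * radius^2"
    "\<And>eta. dist eta etabar < \<delta> \<Longrightarrow> eta \<in> ball etabar radius"
proof -
  define e where "e = gamma_min * kappa / 2 * radius^2 / 3"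
  have e: "e > 0" using gamma_min_pos kappa_pos radius_pos by (simp add: e_def)
  have "continuous_on UNIV kinetic_energy" "continuous_on UNIV potential_energy"
    "continuous_on UNIV controller_energy"
    unfolding kinetic_energy_def potential_energy_def controller_energy_def
    by (auto intro!: continuous_intros)
  hence "isCont kinetic_energy 0" "isCont potential_energy etabar" "isCont controller_energy xi_eq"
    by (simp_all add: continuous_on_eq_continuous_at)
  moreover have "kinetic_energy 0 = 0" "potential_energy etabar = 0" "controller_energy xi_eq = 0"
    by (simp_all add: kinetic_energy_def potential_energy_def controller_energy_def)
  ultimately obtain d1 d2 d3 where d: "d1 > 0" "d2 > 0" "d3 > 0"
    "\<forall>w. dist w 0 < d1 \<longrightarrow> \<bar>kinetic_energy w\<bar> < e"
    "\<forall>eta. dist eta etabar < d2 \<longrightarrow> \<bar>potential_energy eta\<bar> < e"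
    "\<forall>x. dist x xi_eq < d3 \<longrightarrow> \<bar>controller_energy x\<bar> < e"
    using e unfolding continuous_at_eps_delta dist_real_def by (metis diff_zero)
  show thesis
  proof (rule that[of "min (min d1 d2) (min d3 radius)"])
    show "0 < min (min d1 d2) (min d3 radius)" using d radius_pos by simp
    fix eta and w x :: "real^'g"
    assume "dist eta etabar < min (min d1 d2) (min d3 radius)"
      "dist w 0 < min (min d1 d2) (min d3 radius)" "dist x xi_eq < min (min d1 d2) (min d3 radius)"
    hence "\<bar>kinetic_energy w\<bar> < e" "\<bar>potential_energy eta\<bar> < e" "\<bar>controller_energy x\<bar> < e"
      using d(4-6) by auto
    thus "kinetic_energy w + potential_energy eta + controller_energy x < gamma_min * kappa / 2 * radius^2"
      unfolding e_def by linarith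
  qed (simp add: dist_commute)
qed

end

section \<open>Trajectories of the closed loop\<close>

locale closed_loop = power_network B gamma mm a q LC etabar lam
  for B :: "real^'e::finite^('g::finite + 'l::finite)"
    and gamma :: "real^'e"
    and mm a q :: "real^'g"
    and LC :: "real^'g^'g"
    and etabar :: "real^'e"
    and lam :: real +
  fixes eta :: "real \<Rightarrow> real^'e" and omega xi W :: "real \<Rightarrow> real^'g"
  assumes deta: "\<And>t. 0 \<le> t \<Longrightarrow> (eta has_vector_derivative
            (transpose (B_S (rows_G B) (rows_L B) gamma (eta t)) *v omega t)) (at t within {0..})"
    and domega: "\<And>t. 0 \<le> t \<Longrightarrow> (omega has_vector_derivative W t) (at t within {0..})"
    and W_eq: "\<And>t. 0 \<le> t \<Longrightarrow> diag_mat mm *v W t = - (diag_mat a *v omega t)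
                    - ((rows_G B ** diag_mat gamma) *v vsin (eta t))
                    + diag_mat (\<chi> i. 1 / q$i) *v xi t"
    and dxi: "\<And>t. 0 \<le> t \<Longrightarrow> (xi has_vector_derivative
            (- (LC *v xi t) - diag_mat (\<chi> i. 1 / q$i) *v omega t)) (at t within {0..})"
    and eta0: "eta 0 \<in> range (\<lambda>th. transpose B *v th)"
    and load_injection0:
      "rows_L B *v (diag_mat gamma *v vsin (eta 0)) = rows_L B *v (diag_mat gamma *v vsin etabar)"
begin

abbreviation "eta_dot t \<equiv> transpose (B_S (rows_G B) (rows_L B) gamma (eta t)) *v omega t"
abbreviation "xi_dot t \<equiv> - (LC *v xi t) - diag_mat q_inv *v omega t"

lemma xi_has_derivative: "0 \<le> t \<Longrightarrow> (xi has_vector_derivative xi_dot t) (at t within {0..})"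
  using dxi by (simp add: q_inv_def)

lemma M_omega_dot_eq:
  "0 \<le> t \<Longrightarrow> diag_mat mm *v W t
     = - (diag_mat a *v omega t) - rows_G B *v flow (eta t) + diag_mat q_inv *v xi t"
  using W_eq by (simp add: q_inv_def rows_G_gamma_vsin)

lemma continuous_on_eta: "continuous_on {0..} eta"
  unfolding continuous_on_eq_continuous_within
  using deta by (auto intro: has_vector_derivative_continuous)

lemma load_injection_conserved:
  assumes T: "0 \<le> T" and ball: "\<forall>s\<in>{0..T}. eta s \<in> cball etabar radius" and s: "s \<in> {0..T}"
  shows "rows_L B *v flow (eta s) = rows_L B *v flow etabar"
proof (subst vec_eq_iff, intro allI)
  fix j
  define \<phi> where "\<phi> = (\<lambda>s. \<Sum>e\<in>UNIV. rows_L B $ j $ e * (gamma$e * sin (eta s $ e)))"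
  have \<phi>_eq: "\<phi> s = (rows_L B *v flow (eta s))$j" for s
    by (simp add: \<phi>_def flow_def matrix_vector_mult_def)
  have "\<exists>c. \<forall>x\<in>{0..T}. \<phi> x = c"
  proof (rule has_field_derivative_zero_constant)
    fix x assume x: "x \<in> {0..T}"
    have "(\<phi> has_field_derivative
            (\<Sum>e\<in>UNIV. rows_L B $ j $ e * (gamma$e * (cos (eta x $ e) * eta_dot x $ e))))
          (at x within {0..})"
      unfolding \<phi>_def using x
      by (intro DERIV_sum DERIV_cmult DERIV_chain2[OF DERIV_sin] has_real_derivative_vec_nth deta)
        auto
    also have "(\<Sum>e\<in>UNIV. rows_L B $ j $ e * (gamma$e * (cos (eta x $ e) * eta_dot x $ e)))
               = (rows_L B *v (Gamma' gamma (eta x) *v eta_dot x))$j"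
      by (simp add: matrix_vector_mult_def[of "rows_L B"] Gamma'_eq_diag_mat diag_mat_mult_vec
          algebra_simps)
    also have "\<dots> = 0" using rows_L_Gamma'_B_S_eq_0 ball x by auto
    finally show "(\<phi> has_field_derivative 0) (at x within {0..T})" by (rule DERIV_subset) auto
  qed auto
  hence "\<phi> s = \<phi> 0" using s T by fastforce
  thus "(rows_L B *v flow (eta s))$j = (rows_L B *v flow etabar)$j"
    using load_injection0 by (simp add: \<phi>_eq diag_gamma_vsin)
qed

definition lyapunov :: "real \<Rightarrow> real" where
  "lyapunov t = kinetic_energy (omega t) + potential_energy (eta t) + controller_energy (xi t)"

lemma lyapunov_has_derivative:
  assumes t: "0 \<le> t" and inv: "rows_L B *v flow (eta t) = rows_L B *v flow etabar"
  shows "(lyapunov has_real_derivative - dissipation (omega t) (xi t)) (at t within {0..})"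
proof -
  have "(lyapunov has_real_derivative omega t \<bullet> (diag_mat mm *v W t)
      + (flow (eta t) - flow etabar) \<bullet> eta_dot t + (xi t - xi_eq) \<bullet> xi_dot t) (at t within {0..})"
    unfolding lyapunov_def
    by (intro DERIV_add kinetic_energy_has_derivative potential_energy_has_derivative
        controller_energy_has_derivative domega deta xi_has_derivative t)
  thus ?thesis
    unfolding transpose_B_S_eq_lifted
    using lyapunov_derivative_identity[OF M_omega_dot_eq[OF t] inv lifted_frequency_Inl] by simp
qed

lemma lyapunov_le_initial:
  assumes T: "0 \<le> T" and ball: "\<forall>s\<in>{0..T}. eta s \<in> cball etabar radius"
  shows "lyapunov T \<le> lyapunov 0"
proof -
  have "\<exists>x\<in>{0..T}. lyapunov T - lyapunov 0 = (*) (- dissipation (omega x) (xi x)) (T - 0)"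
  proof (rule mvt_very_simple[OF T])
    fix x assume x: "0 \<le> x" "x \<le> T"
    have "(lyapunov has_real_derivative - dissipation (omega x) (xi x)) (at x within {0..})"
      by (rule lyapunov_has_derivative) (use x load_injection_conserved[OF T ball] in auto)
    hence "(lyapunov has_real_derivative - dissipation (omega x) (xi x)) (at x within {0..T})"
      by (rule DERIV_subset) auto
    thus "(lyapunov has_derivative (*) (- dissipation (omega x) (xi x))) (at x within {0..T})"
      by (simp add: has_field_derivative_def)
  qed
  then obtain x where "lyapunov T - lyapunov 0 = - dissipation (omega x) (xi x) * T" by auto
  moreover have "0 \<le> dissipation (omega x) (xi x) * T" using dissipation_nonneg T by simp
  ultimately show ?thesis by linarith
qed

lemma lyapunov_ge:
  "eta t \<in> cball etabar radius \<Longrightarrow> gamma_min * kappa / 2 * (dist (eta t) etabar)^2 \<le> lyapunov t"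
  using potential_energy_ge[of "eta t"] kinetic_energy_nonneg[of "omega t"]
    controller_energy_nonneg[of "xi t"]
  unfolding lyapunov_def by linarith

lemma eta_stays_in_ball:
  assumes V0: "lyapunov 0 < gamma_min * kappa / 2 * radius^2" and e0: "eta 0 \<in> ball etabar radius"
    and t: "0 \<le> t"
  shows "eta t \<in> ball etabar radius"
proof (rule ccontr)
  assume "eta t \<notin> ball etabar radius"
  then obtain t0 where t0: "0 \<le> t0" "eta t0 \<notin> ball etabar radius"
    and ball: "\<forall>s\<in>{0..t0}. eta s \<in> cball etabar radius"
    using first_exit_from_ball[OF continuous_on_eta e0 t] by blast
  have "radius^2 \<le> (dist (eta t0) etabar)^2"
    using t0(2) radius_pos by (intro power_mono) (auto simp: dist_commute)
  hence "gamma_min * kappa / 2 * radius^2 \<le> gamma_min * kappa / 2 * (dist (eta t0) etabar)^2"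
    using gamma_min_pos kappa_pos by (intro mult_left_mono) auto
  also have "\<dots> \<le> lyapunov t0" using ball t0(1) by (intro lyapunov_ge) auto
  also have "\<dots> \<le> lyapunov 0" using lyapunov_le_initial[OF t0(1) ball] .
  finally show False using V0 by linarith
qed

end

locale near_equilibrium = closed_loop B gamma mm a q LC etabar lam eta omega xi W
  for B :: "real^'e::finite^('g::finite + 'l::finite)"
    and gamma :: "real^'e"
    and mm a q :: "real^'g"
    and LC :: "real^'g^'g"
    and etabar :: "real^'e"
    and lam :: real
    and eta :: "real \<Rightarrow> real^'e"
    and omega xi W :: "real \<Rightarrow> real^'g" +
  assumes lyapunov0: "lyapunov 0 < gamma_min * kappa / 2 * radius^2"
    and eta0_ball: "eta 0 \<in> ball etabar radius"
begin

lemma eta_in_cball: "0 \<le> t \<Longrightarrow> eta t \<in> cball etabar radius"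
  using eta_stays_in_ball[OF lyapunov0 eta0_ball] by fastforce

lemma load_injection_eq: "0 \<le> t \<Longrightarrow> rows_L B *v flow (eta t) = rows_L B *v flow etabar"
  using load_injection_conserved[of t] eta_in_cball by auto

lemma lyapunov_derivative:
  "0 \<le> t \<Longrightarrow> (lyapunov has_real_derivative - dissipation (omega t) (xi t)) (at t within {0..})"
  by (rule lyapunov_has_derivative) (auto intro: load_injection_eq)

lemma lyapunov_antimono: "0 \<le> s \<Longrightarrow> s \<le> t \<Longrightarrow> lyapunov t \<le> lyapunov s"
  using antimono_of_nonpos_derivative[OF lyapunov_derivative] dissipation_nonneg by simp

lemma lyapunov_nonneg: "0 \<le> t \<Longrightarrow> 0 \<le> lyapunov t"
  using kinetic_energy_nonneg controller_energy_nonneg potential_energy_nonneg[OF eta_in_cball]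
  unfolding lyapunov_def by (meson add_nonneg_nonneg)

lemma norm_omega_le: "0 \<le> t \<Longrightarrow> norm (omega t) \<le> sqrt (2 * lyapunov 0 / m_min)"
proof -
  assume t: "0 \<le> t"
  have "m_min / 2 * (norm (omega t))^2 \<le> lyapunov 0"
    using kinetic_energy_ge[of "omega t"] lyapunov_antimono[OF _ t] controller_energy_nonneg[of "xi t"]
      potential_energy_nonneg[OF eta_in_cball[OF t]]
    unfolding lyapunov_def by linarith
  hence "(norm (omega t))^2 \<le> 2 * lyapunov 0 / m_min" using m_min_pos by (simp add: field_simps)
  thus ?thesis by (simp add: real_le_rsqrt)
qed

lemma norm_xi_le: "0 \<le> t \<Longrightarrow> norm (xi t - xi_eq) \<le> sqrt (2 * lyapunov 0)"
proof -
  assume t: "0 \<le> t"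
  have "(norm (xi t - xi_eq))^2 / 2 \<le> lyapunov 0"
    using controller_energy_eq[of "xi t"] lyapunov_antimono[OF _ t] kinetic_energy_nonneg[of "omega t"]
      potential_energy_nonneg[OF eta_in_cball[OF t]]
    unfolding lyapunov_def by linarith
  thus ?thesis by (simp add: real_le_rsqrt)
qed

definition freq_set :: "((real^'g) \<times> (real^'g)) set" where
  "freq_set = cball 0 (sqrt (2 * lyapunov 0 / m_min)) \<times> cball xi_eq (sqrt (2 * lyapunov 0))"

definition freq_state :: "real \<Rightarrow> (real^'g) \<times> (real^'g)" where
  "freq_state t = (omega t, xi t)"

definition state :: "real \<Rightarrow> (real^'e) \<times> (real^'g) \<times> (real^'g)" where
  "state t = (eta t, freq_state t)"

lemma freq_state_in: "0 \<le> t \<Longrightarrow> freq_state t \<in> freq_set"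
  using norm_omega_le norm_xi_le unfolding freq_set_def freq_state_def
  by (auto simp: dist_norm norm_minus_commute)

lemma state_in: "0 \<le> t \<Longrightarrow> state t \<in> cball etabar radius \<times> freq_set"
  using eta_in_cball freq_state_in unfolding state_def by auto

lemma compact_freq_set: "compact freq_set"
  unfolding freq_set_def by (simp add: compact_Times)

lemma compact_state_set: "compact (cball etabar radius \<times> freq_set)"
  by (simp add: compact_Times compact_freq_set)

definition omega_rhs :: "(real^'e) \<times> (real^'g) \<times> (real^'g) \<Rightarrow> real^'g" where
  "omega_rhs p = (\<chi> i. (- (a$i * (fst (snd p))$i) - (rows_G B *v flow (fst p))$i
                        + q_inv$i * (snd (snd p))$i) / mm$i)"

lemma W_eq_omega_rhs: "0 \<le> t \<Longrightarrow> W t = omega_rhs (state t)"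
proof -
  assume t: "0 \<le> t"
  have "mm$i * W t $ i = - (a$i * omega t $ i) - (rows_G B *v flow (eta t))$i + q_inv$i * xi t $ i" for i
    using arg_cong[OF M_omega_dot_eq[OF t], of "\<lambda>v. v $ i"] by (simp add: diag_mat_mult_vec)
  moreover have "mm$i \<noteq> 0" for i using M_pos by (metis less_irrefl)
  ultimately show ?thesis
    by (simp add: omega_rhs_def state_def freq_state_def vec_eq_iff eq_divide_eq mult.commute)
qed

lemma continuous_on_omega_rhs: "continuous_on S omega_rhs"
proof -
  have "continuous_on S (\<lambda>p. flow (fst p))"
    unfolding flow_def by (intro continuous_intros)
  thus ?thesis unfolding omega_rhs_def using M_pos
    by (intro continuous_intros bounded_linear.continuous_on[OF matrix_vector_mul_bounded_linear])
      (auto simp: less_imp_neq[symmetric])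
qed

lemma W_bounded: "\<exists>K. \<forall>t\<ge>0. norm (W t) \<le> K"
  using compact_imp_norm_bounded_image[OF compact_state_set continuous_on_omega_rhs]
    W_eq_omega_rhs state_in by metis

lemma xi_dot_bounded: "\<exists>K. \<forall>t\<ge>0. norm (xi_dot t) \<le> K"
proof -
  have "continuous_on freq_set (\<lambda>p. - (LC *v snd p) - diag_mat q_inv *v fst p)"
    by (intro continuous_intros bounded_linear.continuous_on[OF matrix_vector_mul_bounded_linear])
  from compact_imp_norm_bounded_image[OF compact_freq_set this] freq_state_in show ?thesis
    unfolding freq_state_def by (metis fst_conv snd_conv)
qed

lemma eta_dot_bounded: "\<exists>K. \<forall>t\<ge>0. norm (eta_dot t) \<le> K"
proof -
  obtain K where K: "\<forall>eta\<in>cball etabar radius. \<forall>w.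
      norm (transpose (B_S (rows_G B) (rows_L B) gamma eta) *v w) \<le> K * norm w"
    using transpose_B_S_bounded by blast
  have "norm (eta_dot t) \<le> \<bar>K\<bar> * sqrt (2 * lyapunov 0 / m_min)" if t: "0 \<le> t" for t
  proof -
    have "norm (eta_dot t) \<le> K * norm (omega t)" using K eta_in_cball[OF t] by blast
    also have "\<dots> \<le> \<bar>K\<bar> * norm (omega t)" by (simp add: mult_right_mono)
    also have "\<dots> \<le> \<bar>K\<bar> * sqrt (2 * lyapunov 0 / m_min)"
      using norm_omega_le[OF t] by (intro mult_left_mono) auto
    finally show ?thesis .
  qed
  thus ?thesis by blast
qed

lemma state_lipschitz: "\<exists>K. \<forall>s t. 0 \<le> s \<longrightarrow> s \<le> t \<longrightarrow> dist (state t) (state s) \<le> K * (t - s)"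
proof -
  obtain K1 where K1: "\<forall>t\<ge>0. norm (eta_dot t) \<le> K1" using eta_dot_bounded by blast
  obtain K2 where K2: "\<forall>t\<ge>0. norm (W t) \<le> K2" using W_bounded by blast
  obtain K3 where K3: "\<forall>t\<ge>0. norm (xi_dot t) \<le> K3" using xi_dot_bounded by blast
  show ?thesis
  proof (intro exI[of _ "K1 + K2 + K3"] allI impI)
    fix s t :: real assume st: "0 \<le> s" "s \<le> t"
    have "norm (eta t - eta s) \<le> K1 * (t - s)"
      by (rule norm_diff_le_of_vector_derivative_bound_nonneg[OF st deta]) (use K1 in auto)
    moreover have "norm (omega t - omega s) \<le> K2 * (t - s)"
      by (rule norm_diff_le_of_vector_derivative_bound_nonneg[OF st domega]) (use K2 in auto)
    moreover have "norm (xi t - xi s) \<le> K3 * (t - s)"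
      by (rule norm_diff_le_of_vector_derivative_bound_nonneg[OF st xi_has_derivative])
        (use K3 in auto)
    moreover have "dist (state t) (state s)
        \<le> dist (eta t) (eta s) + (dist (omega t) (omega s) + dist (xi t) (xi s))"
      unfolding state_def freq_state_def
      using dist_Pair_le[of "eta t" "(omega t, xi t)" "eta s" "(omega s, xi s)"]
        dist_Pair_le[of "omega t" "xi t" "omega s" "xi s"] by linarith
    ultimately show "dist (state t) (state s) \<le> (K1 + K2 + K3) * (t - s)"
      by (simp add: dist_norm algebra_simps)
  qed
qed

lemma freq_state_lipschitz:
  "\<exists>K. \<forall>s t. 0 \<le> s \<longrightarrow> s \<le> t \<longrightarrow> dist (freq_state t) (freq_state s) \<le> K * (t - s)"
proof -
  have "dist (freq_state t) (freq_state s) \<le> dist (state t) (state s)" for s t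
    unfolding state_def dist_Pair_Pair by (simp add: real_le_rsqrt)
  thus ?thesis using state_lipschitz by (meson order_trans)
qed

lemma dissipation_tendsto_0: "((\<lambda>t. dissipation (omega t) (xi t)) \<longlongrightarrow> 0) at_top"
proof (rule barbalat_lyapunov[OF lyapunov_derivative lyapunov_nonneg dissipation_nonneg])
  fix e :: real assume e: "e > 0"
  obtain K where K: "\<forall>s t. 0 \<le> s \<longrightarrow> s \<le> t \<longrightarrow> dist (freq_state t) (freq_state s) \<le> K * (t - s)"
    using freq_state_lipschitz by blast
  have "continuous_on freq_set (\<lambda>p. dissipation (fst p) (snd p))"
    unfolding dissipation_def
    by (intro continuous_intros bounded_linear.continuous_on[OF matrix_vector_mul_bounded_linear])
  hence "\<exists>d>0. \<forall>s\<ge>0. \<forall>t\<ge>0. \<bar>s - t\<bar> < d \<longrightarrow>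
     dist (dissipation (fst (freq_state s)) (snd (freq_state s)))
          (dissipation (fst (freq_state t)) (snd (freq_state t))) < e"
    by (rule uniformly_continuous_comp_lipschitz_path[OF compact_freq_set _ freq_state_in])
      (use K e in auto)
  thus "\<exists>d>0. \<forall>s\<ge>0. \<forall>t\<ge>0. \<bar>s - t\<bar> < d \<longrightarrow>
     dist (dissipation (omega s) (xi s)) (dissipation (omega t) (xi t)) < e"
    by (simp add: freq_state_def)
qed

lemma omega_tendsto_0: "(omega \<longlongrightarrow> 0) at_top"
proof (rule Lim_null_comparison)
  show "((\<lambda>t. sqrt (dissipation (omega t) (xi t) / a_min)) \<longlongrightarrow> 0) at_top"
    using tendsto_real_sqrt[OF tendsto_divide[OF dissipation_tendsto_0 tendsto_const, of a_min]]
      a_min_pos by simp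
  have "norm (omega t) \<le> sqrt (dissipation (omega t) (xi t) / a_min)" for t
    using dissipation_ge[of "omega t" "xi t"] a_min_pos by (simp add: real_le_rsqrt field_simps)
  thus "eventually (\<lambda>t. norm (omega t) \<le> sqrt (dissipation (omega t) (xi t) / a_min)) at_top"
    by simp
qed

lemma xi_edge_diff_tendsto_0:
  assumes w: "0 < comm_weights$x$y"
  shows "((\<lambda>t. xi t $ x - xi t $ y) \<longlongrightarrow> 0) at_top"
proof (rule Lim_null_comparison)
  show "((\<lambda>t. sqrt (2 * dissipation (omega t) (xi t) / comm_weights$x$y)) \<longlongrightarrow> 0) at_top"
    using tendsto_real_sqrt[OF tendsto_divide[OF tendsto_mult[OF tendsto_const dissipation_tendsto_0]
          tendsto_const, of "comm_weights$x$y"]] w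
    by simp
  have "norm (xi t $ x - xi t $ y) \<le> sqrt (2 * dissipation (omega t) (xi t) / comm_weights$x$y)" for t
  proof -
    have "comm_weights$x$y * (xi t $ x - xi t $ y)^2 \<le> 2 * dissipation (omega t) (xi t)"
      using LC_edge_le[of x y "xi t"] dissipation_ge_LC[of "xi t" "omega t"] by linarith
    thus ?thesis using w by (simp add: real_le_rsqrt field_simps)
  qed
  thus "eventually (\<lambda>t. norm (xi t $ x - xi t $ y)
          \<le> sqrt (2 * dissipation (omega t) (xi t) / comm_weights$x$y)) at_top"
    by simp
qed

lemma xi_diff_tendsto_0: "((\<lambda>t. xi t $ x - xi t $ y) \<longlongrightarrow> 0) at_top"
  using comm_weights(3)[rule_format, of x y]
proof (induction rule: rtrancl_induct)
  case (step y z)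
  have "((\<lambda>t. (xi t $ x - xi t $ y) + (xi t $ y - xi t $ z)) \<longlongrightarrow> 0 + 0) at_top"
    using step xi_edge_diff_tendsto_0[of y z] by (intro tendsto_add) auto
  thus ?case by simp
qed simp

lemma omega_dot_tendsto_0: "(W \<longlongrightarrow> 0) at_top"
proof (rule barbalat[OF domega omega_tendsto_0])
  fix e :: real assume e: "e > 0"
  obtain K where K: "\<forall>s t. 0 \<le> s \<longrightarrow> s \<le> t \<longrightarrow> dist (state t) (state s) \<le> K * (t - s)"
    using state_lipschitz by blast
  have "\<exists>d>0. \<forall>s\<ge>0. \<forall>t\<ge>0. \<bar>s - t\<bar> < d \<longrightarrow> dist (omega_rhs (state s)) (omega_rhs (state t)) < e"
    by (rule uniformly_continuous_comp_lipschitz_path[OF compact_state_set continuous_on_omega_rhs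
          state_in]) (use K e in auto)
  thus "\<exists>d>0. \<forall>s\<ge>0. \<forall>t\<ge>0. \<bar>s - t\<bar> < d \<longrightarrow> dist (W s) (W t) < e"
    using W_eq_omega_rhs by auto
qed

lemma generator_balance_tendsto_0:
  "((\<lambda>t. q_inv$i * xi t $ i - (rows_G B *v flow (eta t))$i) \<longlongrightarrow> 0) at_top"
proof -
  have "((\<lambda>t. mm$i * W t $ i + a$i * omega t $ i) \<longlongrightarrow> mm$i * 0$i + a$i * 0$i) at_top"
    by (intro tendsto_intros omega_dot_tendsto_0 omega_tendsto_0)
  moreover have "\<forall>\<^sub>F t in at_top.
      mm$i * W t $ i + a$i * omega t $ i = q_inv$i * xi t $ i - (rows_G B *v flow (eta t))$i"
  proof (rule eventually_mono[OF eventually_ge_at_top[of 0]])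
    fix t :: real assume t: "0 \<le> t"
    show "mm$i * W t $ i + a$i * omega t $ i = q_inv$i * xi t $ i - (rows_G B *v flow (eta t))$i"
      using arg_cong[OF M_omega_dot_eq[OF t], of "\<lambda>v. v $ i"] by (simp add: diag_mat_mult_vec)
  qed
  ultimately show ?thesis by (simp add: Lim_transform_eventually)
qed

text \<open>The generator balances sum to \<open>(\<Sum>\<^sub>i q\<^sub>i\<^sup>-\<^sup>1) (\<xi>\<^sub>k + \<lambda>) + \<Sum>\<^sub>i q\<^sub>i\<^sup>-\<^sup>1 (\<xi>\<^sub>i - \<xi>\<^sub>k)\<close>, because the total
  generator injection equals minus the conserved load injection.\<close>
lemma xi_nth_tendsto: "((\<lambda>t. xi t $ k) \<longlongrightarrow> - lam) at_top"
proof -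
  define sq where "sq = (\<Sum>i\<in>UNIV. q_inv$i)"
  have sq: "sq > 0" using q_pos by (simp add: sq_def q_inv_def sum_pos)
  have "((\<lambda>t. (\<Sum>i\<in>UNIV. q_inv$i * xi t $ i - (rows_G B *v flow (eta t))$i)
          - (\<Sum>i\<in>UNIV. q_inv$i * (xi t $ i - xi t $ k))) \<longlongrightarrow> 0 - 0) at_top"
    using generator_balance_tendsto_0 xi_diff_tendsto_0
    by (intro tendsto_diff tendsto_null_sum tendsto_mult_right_zero) auto
  moreover have "\<forall>\<^sub>F t in at_top. (\<Sum>i\<in>UNIV. q_inv$i * xi t $ i - (rows_G B *v flow (eta t))$i)
      - (\<Sum>i\<in>UNIV. q_inv$i * (xi t $ i - xi t $ k)) = (xi t $ k + lam) * sq"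
  proof (rule eventually_mono[OF eventually_ge_at_top[of 0]])
    fix t :: real assume t: "0 \<le> t"
    have "(\<Sum>i\<in>UNIV. (rows_G B *v flow (eta t))$i) = (\<Sum>i\<in>UNIV. (rows_G B *v flow etabar)$i)"
      unfolding incidence_matrix_sum_rows_G[OF B_inc] using load_injection_eq[OF t] by simp
    also have "\<dots> = - lam * sq" by (simp add: rows_G_flow_etabar sum_distrib_left sum_negf sq_def)
    finally have "(\<Sum>i\<in>UNIV. q_inv$i * xi t $ i - (rows_G B *v flow (eta t))$i)
        = (\<Sum>i\<in>UNIV. q_inv$i * xi t $ i) + lam * sq"
      by (simp add: sum_subtractf)
    moreover have "(\<Sum>i\<in>UNIV. q_inv$i * (xi t $ i - xi t $ k))
        = (\<Sum>i\<in>UNIV. q_inv$i * xi t $ i) - xi t $ k * sq"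
      by (simp add: algebra_simps sum_subtractf sum_distrib_left sq_def)
    ultimately show "(\<Sum>i\<in>UNIV. q_inv$i * xi t $ i - (rows_G B *v flow (eta t))$i)
      - (\<Sum>i\<in>UNIV. q_inv$i * (xi t $ i - xi t $ k)) = (xi t $ k + lam) * sq"
      by (simp add: algebra_simps)
  qed
  ultimately have "((\<lambda>t. (xi t $ k + lam) * sq) \<longlongrightarrow> 0) at_top"
    by (simp add: Lim_transform_eventually)
  hence "((\<lambda>t. (xi t $ k + lam) * sq / sq - lam) \<longlongrightarrow> 0 / sq - lam) at_top"
    by (intro tendsto_intros) (use sq in auto)
  thus ?thesis using sq by simp
qed

lemma xi_tendsto: "(xi \<longlongrightarrow> xi_eq) at_top"
  by (rule vec_tendstoI) (simp add: xi_eq_eq xi_nth_tendsto)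

lemma B_flow_tendsto_0: "((\<lambda>t. B *v (flow (eta t) - flow etabar)) \<longlongrightarrow> 0) at_top"
proof (rule vec_tendstoI)
  fix n
  show "((\<lambda>t. (B *v (flow (eta t) - flow etabar)) $ n) \<longlongrightarrow> 0 $ n) at_top"
  proof (cases n)
    case (Inl i)
    have "((\<lambda>t. q_inv$i * xi t $ i - (q_inv$i * xi t $ i - (rows_G B *v flow (eta t))$i)
              - (rows_G B *v flow etabar)$i)
           \<longlongrightarrow> q_inv$i * (- lam) - 0 - (rows_G B *v flow etabar)$i) at_top"
      by (intro tendsto_intros xi_nth_tendsto generator_balance_tendsto_0)
    moreover have "q_inv$i * (- lam) - 0 - (rows_G B *v flow etabar)$i = 0"
      by (simp add: rows_G_flow_etabar)
    ultimately show ?thesis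
      using Inl by (simp add: matrix_vector_mult_Inl matrix_vector_mult_diff_distrib)
  next
    case (Inr j)
    have "\<forall>\<^sub>F t in at_top. 0 = (B *v (flow (eta t) - flow etabar)) $ n"
      by (rule eventually_mono[OF eventually_ge_at_top[of 0]])
        (use load_injection_eq Inr in \<open>simp add: matrix_vector_mult_Inr matrix_vector_mult_diff_distrib\<close>)
    from Lim_transform_eventually[OF tendsto_const this] show ?thesis by simp
  qed
qed

text \<open>\<open>B\<^sub>S(\<eta>)\<^sup>T \<omega>\<^sub>G \<in> im B\<^sup>T\<close>, so \<open>\<eta>\<close> moves inside the affine space \<open>\<eta>(0) + im B\<^sup>T = im B\<^sup>T\<close>.\<close>
lemma eta_in_range_transpose: "0 \<le> t \<Longrightarrow> eta t \<in> range ((*v) (transpose B))"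
proof (rule orthogonal_kernel_imp_in_range_transpose, intro allI impI)
  fix z assume t: "0 \<le> t" and Bz: "B *v z = 0"
  have "\<exists>c. \<forall>x\<in>{0..}. z \<bullet> eta x = c"
  proof (rule has_field_derivative_zero_constant)
    fix x :: real assume x: "x \<in> {0..}"
    have "((\<lambda>s. z \<bullet> eta s) has_vector_derivative z \<bullet> eta_dot x) (at x within {0..})"
      by (rule bounded_linear.has_vector_derivative[OF bounded_linear_inner_right deta]) (use x in auto)
    moreover have "z \<bullet> eta_dot x = 0"
      unfolding transpose_B_S_eq_lifted inner_matrix_vector_mult by (simp add: Bz)
    ultimately show "((\<lambda>s. z \<bullet> eta s) has_field_derivative 0) (at x within {0..})"
      by (simp add: has_real_derivative_iff_has_vector_derivative)
  qed auto
  hence "z \<bullet> eta t = z \<bullet> eta 0" using t by fastforce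
  moreover obtain th where "eta 0 = transpose B *v th" using eta0 by auto
  hence "z \<bullet> eta 0 = 0" by (simp add: inner_matrix_vector_mult Bz)
  ultimately show "z \<bullet> eta t = 0" by simp
qed

lemma norm_eta_diff_le:
  obtains C where "\<And>t. 0 \<le> t \<Longrightarrow>
    norm (eta t - etabar) \<le> C * norm (B *v (flow (eta t) - flow etabar))"
proof -
  obtain C where C: "C > 0" "\<forall>v\<in>range ((*v) (transpose B)). \<exists>x. transpose B *v x = v \<and> norm x \<le> C * norm v"
    using matrix_range_bounded_preimage by blast
  have c: "gamma_min * kappa > 0" using gamma_min_pos kappa_pos by simp
  have "norm (eta t - etabar) \<le> C / (gamma_min * kappa) * norm (B *v (flow (eta t) - flow etabar))"
    if t: "0 \<le> t" for t
  proof -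
    let ?v = "eta t - etabar"
    let ?w = "flow (eta t) - flow etabar"
    have "?v \<in> range ((*v) (transpose B))"
      using eta_in_range_transpose[OF t] etabar_im
      by (auto simp: matrix_vector_mult_diff_distrib[symmetric])
    then obtain th where th: "transpose B *v th = ?v" "norm th \<le> C * norm ?v" using C by blast
    have "gamma_min * kappa * (norm ?v)^2 \<le> ?v \<bullet> ?w"
      by (rule flow_strongly_monotone[OF eta_in_cball[OF t]])
    also have "\<dots> = th \<bullet> (B *v ?w)"
      unfolding th(1)[symmetric] by (simp add: inner_matrix_vector_mult inner_commute)
    also have "\<dots> \<le> norm th * norm (B *v ?w)" by (rule norm_cauchy_schwarz)
    also have "\<dots> \<le> C * norm ?v * norm (B *v ?w)" using th(2) by (intro mult_right_mono) auto
    finally have *: "gamma_min * kappa * (norm ?v)^2 \<le> C * norm ?v * norm (B *v ?w)" .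
    show ?thesis
    proof (cases "norm ?v = 0")
      case True thus ?thesis using C c by (simp del: norm_eq_zero)
    next
      case False
      with * have "gamma_min * kappa * norm ?v \<le> C * norm (B *v ?w)"
        by (simp add: power2_eq_square algebra_simps mult_le_cancel_left_pos)
      thus ?thesis using c by (simp add: field_simps)
    qed
  qed
  thus thesis by (rule that)
qed

lemma eta_tendsto: "(eta \<longlongrightarrow> etabar) at_top"
proof -
  obtain C where C: "\<And>t. 0 \<le> t \<Longrightarrow> norm (eta t - etabar) \<le> C * norm (B *v (flow (eta t) - flow etabar))"
    using norm_eta_diff_le by blast
  have "((\<lambda>t. eta t - etabar) \<longlongrightarrow> 0) at_top"
  proof (rule Lim_null_comparison)
    show "\<forall>\<^sub>F t in at_top. norm (eta t - etabar) \<le> C * norm (B *v (flow (eta t) - flow etabar))"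
      by (rule eventually_mono[OF eventually_ge_at_top[of 0] C])
    show "((\<lambda>t. C * norm (B *v (flow (eta t) - flow etabar))) \<longlongrightarrow> 0) at_top"
      using tendsto_mult[OF tendsto_const tendsto_norm[OF B_flow_tendsto_0], of C] by simp
  qed
  thus ?thesis by (simp add: Lim_null[symmetric])
qed

end

context power_network
begin

lemma converges_to_equilibrium:
  fixes eta :: "real \<Rightarrow> real^'e" and omega xi :: "real \<Rightarrow> real^'g"
  assumes trajectory: "\<forall>t\<ge>0.
         (eta has_vector_derivative
            (transpose (B_S (rows_G B) (rows_L B) gamma (eta t)) *v omega t)) (at t within {0..})
       \<and> (\<exists>w'. (omega has_vector_derivative w') (at t within {0..})
               \<and> diag_mat mm *v w' = - (diag_mat a *v omega t)
                    - ((rows_G B ** diag_mat gamma) *v vsin (eta t))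
                    + diag_mat (\<chi> i. 1 / q$i) *v xi t)
       \<and> (xi has_vector_derivative
            (- (LC *v xi t) - diag_mat (\<chi> i. 1 / q$i) *v omega t)) (at t within {0..})"
    and "eta 0 \<in> range (\<lambda>th. transpose B *v th)"
    and "rows_L B *v (diag_mat gamma *v vsin (eta 0)) = rows_L B *v (diag_mat gamma *v vsin etabar)"
    and "kinetic_energy (omega 0) + potential_energy (eta 0) + controller_energy (xi 0)
           < gamma_min * kappa / 2 * radius^2"
    and "eta 0 \<in> ball etabar radius"
  shows "(eta \<longlongrightarrow> etabar) at_top \<and> (omega \<longlongrightarrow> 0) at_top \<and> (xi \<longlongrightarrow> xi_eq) at_top
    \<and> ((\<lambda>t. diag_mat (\<chi> i. 1 / q$i) *v xi t) \<longlongrightarrow> u_star) at_top"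
proof -
  define W where "W t = (SOME w'. (omega has_vector_derivative w') (at t within {0..})
               \<and> diag_mat mm *v w' = - (diag_mat a *v omega t)
                    - ((rows_G B ** diag_mat gamma) *v vsin (eta t))
                    + diag_mat (\<chi> i. 1 / q$i) *v xi t)" for t
  have "(omega has_vector_derivative W t) (at t within {0..})
        \<and> diag_mat mm *v W t = - (diag_mat a *v omega t)
             - ((rows_G B ** diag_mat gamma) *v vsin (eta t)) + diag_mat (\<chi> i. 1 / q$i) *v xi t"
    if "0 \<le> t" for t
    unfolding W_def by (rule someI_ex) (use trajectory that in blast)
  then interpret closed_loop B gamma mm a q LC etabar lam eta omega xi W
    by unfold_locales (use assms in auto)
  interpret near_equilibrium B gamma mm a q LC etabar lam eta omega xi W
    by unfold_locales (use assms in \<open>auto simp: lyapunov_def\<close>)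
  have "((\<lambda>t. diag_mat q_inv *v xi t) \<longlongrightarrow> diag_mat q_inv *v xi_eq) at_top"
    by (rule bounded_linear.tendsto[OF matrix_vector_mul_bounded_linear xi_tendsto])
  thus ?thesis
    using eta_tendsto omega_tendsto_0 xi_tendsto by (simp add: q_inv_mult_xi_eq flip: q_inv_def)
qed

end

theorem theorem3:
  fixes B :: "real^'e::finite^('g::finite + 'l::finite)"
    and gamma :: "real^'e"
    and mm a q :: "real^'g"
    and LC :: "real^'g^'g"
    and etabar :: "real^'e"
    and pstar :: "real^'l"
    and lam :: real
    and ustar xibar :: "real^'g"
  assumes B_inc: "incidence_matrix B"
    and B_conn: "connected_incidence B"
    and gamma_pos: "\<forall>k. 0 < gamma$k"
    and M_pos: "\<forall>i. 0 < mm$i"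
    and A_pos: "\<forall>i. 0 < a$i"
    and q_pos: "\<forall>i. 0 < q$i"
    and LC_lap: "comm_laplacian LC"
    and pstar_def: "pstar = rows_L B *v (diag_mat gamma *v vsin etabar)"
    and lam_def: "lam = (\<Sum>i\<in>UNIV. pstar$i) / (\<Sum>i\<in>UNIV. 1 / q$i)"
    and ustar_def: "ustar = - (lam *s (\<chi> i. 1 / q$i))"
    and xibar_def: "xibar = diag_mat q *v ustar"
    and etabar_im: "etabar \<in> range (\<lambda>th. transpose B *v th)"
    and etabar_Omega: "etabar \<in> Omega"
    and etabar_eq: "0 = - ((rows_G B ** diag_mat gamma) *v vsin etabar) - lam *s (\<chi> i. 1 / q$i)"
  shows "\<exists>\<delta>>0. \<forall>(eta :: real \<Rightarrow> real^'e) (omega :: real \<Rightarrow> real^'g) (xi :: real \<Rightarrow> real^'g).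
     ((\<forall>t\<ge>0.
         (eta has_vector_derivative
            (transpose (B_S (rows_G B) (rows_L B) gamma (eta t)) *v omega t)) (at t within {0..})
       \<and> (\<exists>w'. (omega has_vector_derivative w') (at t within {0..})
               \<and> diag_mat mm *v w' = - (diag_mat a *v omega t)
                    - ((rows_G B ** diag_mat gamma) *v vsin (eta t))
                    + diag_mat (\<chi> i. 1 / q$i) *v xi t)
       \<and> (xi has_vector_derivative
            (- (LC *v xi t) - diag_mat (\<chi> i. 1 / q$i) *v omega t)) (at t within {0..}))
      \<and> eta 0 \<in> range (\<lambda>th. transpose B *v th)
      \<and> rows_L B *v (diag_mat gamma *v vsin (eta 0)) = rows_L B *v (diag_mat gamma *v vsin etabar)
      \<and> dist (eta 0) etabar < \<delta> \<and> dist (omega 0) 0 < \<delta> \<and> dist (xi 0) xibar < \<delta>)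
     \<longrightarrow> (eta \<longlongrightarrow> etabar) at_top \<and> (omega \<longlongrightarrow> 0) at_top \<and> (xi \<longlongrightarrow> xibar) at_top
         \<and> ((\<lambda>t. diag_mat (\<chi> i. 1 / q$i) *v xi t) \<longlongrightarrow> ustar) at_top"
proof -
  interpret power_network B gamma mm a q LC etabar lam
    by unfold_locales (fact assms)+
  have xibar: "xibar = xi_eq" and ustar: "ustar = u_star"
    by (simp_all add: xibar_def ustar_def xi_eq_def u_star_def q_inv_def)
  obtain \<delta> where "\<delta> > 0" and energy: "\<And>eta (w :: real^'g) x. dist eta etabar < \<delta> \<Longrightarrow> dist w 0 < \<delta>
      \<Longrightarrow> dist x xi_eq < \<delta> \<Longrightarrow>
      kinetic_energy w + potential_energy eta + controller_energy x < gamma_min * kappa / 2 * radius^2"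
    and ball: "\<And>eta. dist eta etabar < \<delta> \<Longrightarrow> eta \<in> ball etabar radius"
    using small_energy_near_equilibrium by metis
  show ?thesis
    unfolding xibar ustar
    by (intro exI[of _ \<delta>] conjI[OF \<open>\<delta> > 0\<close>] allI impI, elim conjE, rule converges_to_equilibrium)
      (assumption | rule energy ball)+
qed

end
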